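(* Let $\Omega$ be a bounded domain in $\mathbb{R}^n$, $p\geq 1$, let $f$ satisfy the standing assumptions with $k=(f')^{-1}$, and let $\nu=\sum_{i=1}^m a_i\delta_{x_i}\in\mathcal{P}(\Omega)$ be a purely atomic probability with finitely many atoms $x_1,\dots,x_m$. If $\mu=u\cdot\mathcal{L}^n$ minimizes $\mathfrak{F}^p_\nu$ over $\mathcal{P}(\Omega)$, then there exist constants $c_1,\dots,c_m\in\mathbb{R}$ such that $$u(x)=k\Big(\max\big\{c_1-|x-x_1|^p,\dots,c_m-|x-x_m|^p,0\big\}\Big)\quad\text{for a.e. }x\in\Omega.$$ In particular, up to a Lebesgue-null set, $\{u>0\}=\Omega\cap\bigcup_{i:\,c_i>0}B(x_i,c_i^{1/p})$.
   Context: A bounded domain is a bounded set $\Omega\subset\mathbb{R}^n$ which is the closure of a nonempty connected open set and whose boundary is Lebesgue-negligible. $\mathcal{P}(\Omega)$ is the set of Borel probability measures on $\Omega$. Standing assumptions on $f$: $f:[0,+\infty)\to[0,+\infty)$ is strictly convex and $C^1$, $f(0)=0$, $f'(0)=0$, and $\lim_{t\to+\infty}f(t)/t=+\infty$; $k=(f')^{-1}:[0,+\infty)\to[0,+\infty)$, continuous and strictly increasing with $k(0)=0$. $T_p(\mu,\nu)=\inf_\gamma\int|x-y|^p\,d\gamma$ over transport plans. $F(\mu)=\int_\Omega f(u)\,dx$ if $\mu=u\cdot\mathcal{L}^n$, $+\infty$ otherwise. $\mathfrak{F}^p_\nu(\mu)=T_p(\mu,\nu)+F(\mu)$. $B(x,r)$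 is the open ball of center $x$ and radius $r$. *)

theory Defs
  imports "HOL-Analysis.Analysis" "HOL-Probability.Probability"
begin

definition bounded_domain :: "'a::euclidean_space set \<Rightarrow> bool" where
  "bounded_domain \<Omega> \<longleftrightarrow> bounded \<Omega> \<and>
     (\<exists>U. open U \<and> connected U \<and> U \<noteq> {} \<and> \<Omega> = closure U) \<and>
     frontier \<Omega> \<in> null_sets lborel"

definition prob_on :: "'a::euclidean_space set \<Rightarrow> 'a measure set" where
  "prob_on \<Omega> = {M. prob_space M \<and> sets M = sets borel \<and> emeasure M (- \<Omega>) = 0}"

definition transport_plans :: "'a::euclidean_space measure \<Rightarrow> 'a measure \<Rightarrow> ('a \<times> 'a) measure set" where
  "transport_plans \<mu> \<nu> = {\<gamma>. prob_space \<gamma> \<and> sets \<gamma> = sets borel \<and>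
      distr \<gamma> borel fst = \<mu> \<and> distr \<gamma> borel snd = \<nu>}"

definition Tp :: "real \<Rightarrow> 'a::euclidean_space measure \<Rightarrow> 'a measure \<Rightarrow> ennreal" where
  "Tp p \<mu> \<nu> = (INF \<gamma>\<in>transport_plans \<mu> \<nu>. \<integral>\<^sup>+ z. ennreal (dist (fst z) (snd z) powr p) \<partial>\<gamma>)"

text \<open>F(mu) = integral of f(u) over \<Omega> if mu = u L^n, +infinity otherwise.
  All densities agree a.e., so the infimum over representatives is the value;
  the infimum over the empty set is +infinity.\<close>
definition Ffun :: "(real \<Rightarrow> real) \<Rightarrow> 'a::euclidean_space set \<Rightarrow> 'a measure \<Rightarrow> ennreal" where
  "Ffun f \<Omega> \<mu> = (INF u\<in>{u. u \<in> borel_measurable borel \<and> (\<forall>x. 0 \<le> u x) \<and>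
                         \<mu> = density lborel (\<lambda>x. ennreal (u x))}.
                   \<integral>\<^sup>+ x\<in>\<Omega>. ennreal (f (u x)) \<partial>lborel)"

definition frakF :: "real \<Rightarrow> (real \<Rightarrow> real) \<Rightarrow> 'a::euclidean_space set \<Rightarrow> 'a measure \<Rightarrow> 'a measure \<Rightarrow> ennreal" where
  "frakF p f \<Omega> \<nu> \<mu> = Tp p \<mu> \<nu> + Ffun f \<Omega> \<mu>"

definition strictly_convex_on :: "real set \<Rightarrow> (real \<Rightarrow> real) \<Rightarrow> bool" where
  "strictly_convex_on S f \<longleftrightarrow> (\<forall>x\<in>S. \<forall>y\<in>S. \<forall>t. x \<noteq> y \<and> 0 < t \<and> t < 1 \<longrightarrow>
      f ((1 - t) * x + t * y) < (1 - t) * f x + t * f y)"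

end

theory Submission
  imports Defs
begin

(* The proof goes through the Kantorovich dual.  For levels l put
     potential l x = max_i (l_i - |x - x_i|^p),   dual l = sum_i l_i a_i - int_Omega fstar (potential l),
   where fstar is the convex conjugate of f on [0, infinity).  Integrating
   l_i - potential l x <= |x - x_i|^p against a transport plan and using the Fenchel-Young
   inequality gives weak duality: for u L^n in P(Omega), dual l plus the integral of the
   (nonnegative) Fenchel-Young gap of u is at most frakF(u L^n).  The dual is bounded above and
   coercive, so it has a maximiser l.  Its first-order condition says that the density
   k(max(potential l, 0)) can be coupled with nu at total cost exactly dual l; the mass of the
   points where several cones tie is split between the atoms by a projection argument in finite
   dimension.  So a minimiser is no worse than dual l, its Fenchel-Young gap vanishes almost
   everywhere, and strict convexity of f forces u = k(max(potential l, 0)); the constants are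
   c_i = l_i. *)

section \<open>Convex integrands and their conjugate\<close>

locale convex_integrand =
  fixes f f' k :: "real \<Rightarrow> real"
  assumes nonneg: "\<forall>t\<ge>0. f t \<ge> 0"
    and strictly_convex: "strictly_convex_on {0..} f"
    and deriv: "\<forall>t\<ge>0. (f has_real_derivative f' t) (at t within {0..})"
    and zero: "f 0 = 0" and deriv_zero: "f' 0 = 0"
    and inverse_deriv: "\<forall>s\<ge>0. k s \<ge> 0 \<and> f' (k s) = s"
begin

lemma strictly_convexD:
  "x \<ge> 0 \<Longrightarrow> y \<ge> 0 \<Longrightarrow> x \<noteq> y \<Longrightarrow> 0 < t \<Longrightarrow> t < 1 \<Longrightarrow>
     f ((1 - t) * x + t * y) < (1 - t) * f x + t * f y"
  using strictly_convex unfolding strictly_convex_on_def by blast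

lemma convex_on_nonneg: "convex_on {0..} f"
proof (rule convex_onI)
  fix t x y :: real
  assume "0 < t" "t < 1" "x \<in> {0..}" "y \<in> {0..}"
  then show "f ((1 - t) *\<^sub>R x + t *\<^sub>R y) \<le> (1 - t) * f x + t * f y"
    using strictly_convexD[of x y t] by (cases "x = y") (auto simp: algebra_simps)
qed (rule convex_real_interval)

lemma continuous_on_nonneg: "continuous_on {0..} f"
proof -
  have "continuous (at t within {0..}) f" if "t \<in> {0..}" for t
    using deriv DERIV_continuous[of f "f' t"] that by auto
  then show ?thesis using continuous_on_eq_continuous_within by blast
qed

lemma tangent_le:
  assumes "t0 \<ge> 0" "t \<ge> 0"
  shows "f t0 + f' t0 * (t - t0) \<le> f t"
proof (cases "t0 = 0")
  case True
  then show ?thesis using nonneg zero deriv_zero assms by simp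
next
  case False
  then have "t0 \<in> interior {0..}" using assms by simp
  then have "f' t0 * (t - t0) \<le> f t - f t0"
    using assms deriv by (intro convex_on_imp_above_tangent[OF convex_on_nonneg]) auto
  then show ?thesis by simp
qed

lemma tangent_less:
  assumes "t0 \<ge> 0" "t \<ge> 0" "t \<noteq> t0"
  shows "f t0 + f' t0 * (t - t0) < f t"
proof -
  define s where "s = (1 - 1/2) * t0 + (1/2) * t"
  have "f s < (1 - 1/2) * f t0 + (1/2) * f t"
    unfolding s_def using assms by (intro strictly_convexD) auto
  moreover have "f t0 + f' t0 * (s - t0) \<le> f s"
    using assms by (intro tangent_le) (auto simp: s_def)
  ultimately show ?thesis by (simp add: s_def field_simps)
qed

lemma deriv_strict_mono:
  assumes "0 \<le> x" "x < y"
  shows "f' x < f' y"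
proof -
  have "(f' y - f' x) * (y - x) > 0"
    using tangent_less[of x y] tangent_less[of y x] assms by (simp add: algebra_simps)
  then show ?thesis using assms by (simp add: zero_less_mult_iff)
qed

lemma deriv_mono: "0 \<le> x \<Longrightarrow> x \<le> y \<Longrightarrow> f' x \<le> f' y"
  using deriv_strict_mono[of x y] by (cases "x = y") auto

lemma mono_nonneg: "0 \<le> s \<Longrightarrow> s \<le> t \<Longrightarrow> f s \<le> f t"
  using tangent_le[of s t] deriv_mono[of 0 s] deriv_zero mult_nonneg_nonneg[of "f' s" "t - s"]
  by linarith

definition kplus :: "real \<Rightarrow> real" where "kplus s = k (max 0 s)"

lemma kplus_nonneg: "kplus s \<ge> 0"
  using inverse_deriv unfolding kplus_def by auto

lemma deriv_kplus: "f' (kplus s) = max 0 s"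
  using inverse_deriv unfolding kplus_def by auto

lemma kplus_mono: "s \<le> s' \<Longrightarrow> kplus s \<le> kplus s'"
  using deriv_strict_mono[of "kplus s'" "kplus s"] kplus_nonneg deriv_kplus
  by (metis max.mono not_le order.refl leD)

lemma kplus_eq_0: "s \<le> 0 \<Longrightarrow> kplus s = 0"
  using deriv_strict_mono[of 0 "kplus s"] kplus_nonneg[of s] deriv_kplus[of s] deriv_zero
  by (metis max_absorb1 order_less_irrefl order_le_less)

lemma kplus_pos: "s > 0 \<Longrightarrow> kplus s > 0"
  using deriv_kplus[of s] deriv_zero kplus_nonneg[of s]
  by (metis less_eq_real_def max.absorb2 order_less_irrefl)

lemma kplus_pos_iff: "kplus s > 0 \<longleftrightarrow> s > 0"
  using kplus_pos kplus_eq_0[of s] by (cases "s > 0") auto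

lemma kplus_less_iff:
  assumes "0 \<le> y"
  shows "kplus s < y \<longleftrightarrow> max 0 s < f' y"
proof
  assume "kplus s < y"
  then show "max 0 s < f' y"
    using deriv_strict_mono[OF kplus_nonneg] deriv_kplus by metis
next
  assume less: "max 0 s < f' y"
  show "kplus s < y"
  proof (rule ccontr)
    assume "\<not> kplus s < y"
    then have "f' y \<le> max 0 s"
      using deriv_mono[OF assms, of "kplus s"] deriv_kplus by simp
    then show False using less by simp
  qed
qed

lemma isCont_kplus: "isCont kplus s0"
  unfolding isCont_def
proof (rule order_tendstoI)
  fix y assume y: "kplus s0 < y"
  then have less: "max 0 s0 < f' y"
    using kplus_less_iff[of y s0] kplus_nonneg[of s0] by simp
  then have "\<forall>\<^sub>F s in at s0. s < f' y"
    by (intro order_tendstoD(2)[OF tendsto_ident_at]) simp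
  then show "\<forall>\<^sub>F s in at s0. kplus s < y"
    using less y kplus_less_iff kplus_nonneg[of s0] by (elim eventually_mono) simp
next
  fix y assume y: "y < kplus s0"
  show "\<forall>\<^sub>F s in at s0. y < kplus s"
  proof (cases "y < 0")
    case True
    then show ?thesis using kplus_nonneg by (simp add: order_less_le_trans)
  next
    case False
    then have "f' y < s0"
      using deriv_strict_mono[OF _ y] deriv_kplus deriv_mono[of 0 y] deriv_zero by auto
    then have "\<forall>\<^sub>F s in at s0. f' y < s"
      by (rule order_tendstoD(1)[OF tendsto_ident_at])
    then show ?thesis
    proof (rule eventually_mono)
      fix s assume "f' y < s"
      show "y < kplus s"
      proof (rule ccontr)
        assume "\<not> y < kplus s"
        then have "max 0 s \<le> f' y"
          using deriv_mono[OF kplus_nonneg, of s y] deriv_kplus by simp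
        then show False using \<open>f' y < s\<close> by simp
      qed
    qed
  qed
qed

lemma continuous_on_kplus: "continuous_on A kplus"
  by (intro continuous_at_imp_continuous_on ballI isCont_kplus)

(* The convex conjugate of f, extended by +infinity to negative arguments:
   fstar s = sup {s t - f t | t >= 0}, the supremum being attained at t = kplus s. *)
definition fstar :: "real \<Rightarrow> real" where "fstar s = s * kplus s - f (kplus s)"

lemma fenchel_young:
  assumes "t \<ge> 0"
  shows "s * t - f t \<le> fstar s"
proof (cases "s \<ge> 0")
  case True
  then show ?thesis
    using tangent_le[OF kplus_nonneg assms, of s] deriv_kplus unfolding fstar_def
    by (simp add: algebra_simps)
next
  case False
  then show ?thesis
    using kplus_eq_0[of s] mult_nonpos_nonneg[of s t] nonneg assms zero unfolding fstar_def
    by fastforce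
qed

lemma fenchel_young_strict:
  assumes "t \<ge> 0" "t \<noteq> kplus s"
  shows "s * t - f t < fstar s"
proof (cases "s \<ge> 0")
  case True
  then show ?thesis
    using tangent_less[OF kplus_nonneg assms] deriv_kplus unfolding fstar_def
    by (simp add: algebra_simps)
next
  case False
  then have "kplus s = 0" by (simp add: kplus_eq_0)
  then show ?thesis
    using False assms mult_neg_pos[of s t] nonneg zero unfolding fstar_def by fastforce
qed

lemma fstar_support: "fstar s + kplus s * (s' - s) \<le> fstar s'"
  using fenchel_young[OF kplus_nonneg, of s' s] unfolding fstar_def by (simp add: algebra_simps)

lemma fstar_eq_0: "s \<le> 0 \<Longrightarrow> fstar s = 0"
  unfolding fstar_def using kplus_eq_0 zero by simp

lemma fstar_nonneg: "fstar s \<ge> 0"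
  using fenchel_young[of 0 s] zero by simp

lemma fstar_mono: "s \<le> s' \<Longrightarrow> fstar s \<le> fstar s'"
proof -
  assume "s \<le> s'"
  then have "0 \<le> kplus s * (s' - s)" using kplus_nonneg by simp
  then show ?thesis using fstar_support[of s s'] by linarith
qed

lemma fstar_lipschitz: "\<bar>fstar s' - fstar s\<bar> \<le> max (kplus s) (kplus s') * \<bar>s' - s\<bar>"
proof (cases "s \<le> s'")
  case True
  have "fstar s' - fstar s \<le> kplus s' * (s' - s)"
    using fstar_support[of s' s] by (simp add: algebra_simps)
  also have "\<dots> \<le> max (kplus s) (kplus s') * (s' - s)"
    using True by (intro mult_right_mono) auto
  finally show ?thesis using True fstar_mono[OF True] by simp
next
  case False
  have "fstar s - fstar s' \<le> kplus s * (s - s')"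
    using fstar_support[of s s'] by (simp add: algebra_simps)
  also have "\<dots> \<le> max (kplus s) (kplus s') * (s - s')"
    using False by (intro mult_right_mono) auto
  finally show ?thesis using False fstar_mono[of s' s] by simp
qed

lemma continuous_on_fstar: "continuous_on A fstar"
  unfolding fstar_def
  by (intro continuous_intros continuous_on_kplus continuous_on_compose2[OF continuous_on_nonneg])
     (auto simp: kplus_nonneg)

lemma borel_measurable_f[measurable (raw)]:
  assumes "g \<in> borel_measurable M" "\<And>x. x \<in> space M \<Longrightarrow> g x \<ge> 0"
  shows "(\<lambda>x. f (g x)) \<in> borel_measurable M"
proof -
  have "continuous_on UNIV (\<lambda>t. f (max 0 t))"
    by (intro continuous_on_compose2[OF continuous_on_nonneg] continuous_intros) auto
  then have "(\<lambda>x. f (max 0 (g x))) \<in> borel_measurable M"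
    using assms(1) by (rule borel_measurable_continuous_on)
  then show ?thesis by (rule measurable_cong[THEN iffD1, rotated]) (use assms(2) in auto)
qed

lemma borel_measurable_kplus[measurable (raw)]:
  "g \<in> borel_measurable M \<Longrightarrow> (\<lambda>x. kplus (g x)) \<in> borel_measurable M"
  by (rule borel_measurable_continuous_on[OF continuous_on_kplus])

lemma borel_measurable_fstar[measurable (raw)]:
  "g \<in> borel_measurable M \<Longrightarrow> (\<lambda>x. fstar (g x)) \<in> borel_measurable M"
  by (rule borel_measurable_continuous_on[OF continuous_on_fstar])

end

section \<open>Splitting tied mass\<close>

lemma inverse_Suc_subseq_le: "strict_mono r \<Longrightarrow> 1 / real (Suc (r n)) \<le> 1 / real (Suc n)"
  using seq_suble[of r n] by (intro divide_left_mono) auto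

lemma finite_bounded_convergent_subseq:
  fixes X :: "nat \<Rightarrow> 'i \<Rightarrow> real"
  assumes "finite J" and "\<And>n j. j \<in> J \<Longrightarrow> \<bar>X n j\<bar> \<le> B"
  shows "\<exists>r L. strict_mono r \<and> (\<forall>j\<in>J. (\<lambda>n. X (r n) j) \<longlonglongrightarrow> L j)"
  using assms
proof (induction J)
  case empty
  show ?case by (intro exI[of _ id]) (auto simp: strict_mono_def)
next
  case (insert j J)
  then obtain r L where r: "strict_mono r" and L: "\<forall>j\<in>J. (\<lambda>n. X (r n) j) \<longlonglongrightarrow> L j"
    by auto
  have "X (r n) j \<in> {-B..B}" for n
    using insert.prems[of j "r n"] by (simp add: abs_le_iff)
  then obtain l s where s: "strict_mono s" and l: "((\<lambda>n. X (r n) j) \<circ> s) \<longlonglongrightarrow> l"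
    using seq_compactE[OF compact_imp_seq_compact[OF compact_Icc]] by metis
  have "(\<lambda>n. X ((r \<circ> s) n) j') \<longlonglongrightarrow> (L(j := l)) j'" if "j' \<in> insert j J" for j'
  proof (cases "j' = j")
    case True
    then show ?thesis using l by (simp add: o_def)
  next
    case False
    then have "((\<lambda>n. X (r n) j') \<circ> s) \<longlonglongrightarrow> L j'"
      using L s that by (intro LIMSEQ_subseq_LIMSEQ) auto
    then show ?thesis using False by (simp add: o_def)
  qed
  then show ?case using strict_mono_o[OF r s] by blast
qed

definition splittings :: "nat set set \<Rightarrow> (nat set \<Rightarrow> nat \<Rightarrow> real) set" where
  "splittings \<T> = {\<sigma>. \<forall>T\<in>\<T>. (\<forall>i. 0 \<le> \<sigma> T i \<and> (i \<notin> T \<longrightarrow> \<sigma> T i = 0)) \<and> (\<Sum>i\<in>T. \<sigma> T i) = 1}"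

lemma splittingsD:
  assumes "\<sigma> \<in> splittings \<T>" "T \<in> \<T>"
  shows "0 \<le> \<sigma> T i" "i \<notin> T \<Longrightarrow> \<sigma> T i = 0" "(\<Sum>i\<in>T. \<sigma> T i) = 1"
  using assms unfolding splittings_def by auto

lemma splittings_le_one:
  assumes "\<sigma> \<in> splittings \<T>" "T \<in> \<T>" "finite T"
  shows "\<sigma> T i \<le> 1"
proof (cases "i \<in> T")
  case True
  then have "\<sigma> T i \<le> (\<Sum>j\<in>T. \<sigma> T j)"
    using assms splittingsD(1)[OF assms(1,2)] by (intro member_le_sum) auto
  then show ?thesis using splittingsD(3)[OF assms(1,2)] by simp
qed (use splittingsD(2)[OF assms(1,2)] in simp)

lemma point_splitting:
  assumes "\<And>T. T \<in> \<T> \<Longrightarrow> j T \<in> T \<and> finite T"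
  shows "(\<lambda>T i. if i = j T then 1 else 0) \<in> splittings \<T>"
  using assms unfolding splittings_def by auto

lemma splittings_segment:
  assumes "\<sigma> \<in> splittings \<T>" "\<tau> \<in> splittings \<T>" "0 \<le> t" "t \<le> 1"
  shows "(\<lambda>T i. \<sigma> T i + t * (\<tau> T i - \<sigma> T i)) \<in> splittings \<T>"
  unfolding splittings_def
proof (intro CollectI ballI conjI allI impI)
  fix T i assume T: "T \<in> \<T>"
  have "\<sigma> T i + t * (\<tau> T i - \<sigma> T i) = (1 - t) * \<sigma> T i + t * \<tau> T i"
    by (simp add: algebra_simps)
  then show "0 \<le> \<sigma> T i + t * (\<tau> T i - \<sigma> T i)"
    using assms splittingsD(1)[OF _ T] by simp
  show "\<sigma> T i + t * (\<tau> T i - \<sigma> T i) = 0" if "i \<notin> T"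
    using splittingsD(2)[OF assms(1) T that] splittingsD(2)[OF assms(2) T that] by simp
  show "(\<Sum>i\<in>T. \<sigma> T i + t * (\<tau> T i - \<sigma> T i)) = 1"
    using splittingsD(3)[OF assms(1) T] splittingsD(3)[OF assms(2) T]
    by (simp add: sum.distrib sum_subtractf sum_distrib_left[symmetric])
qed

lemma splittings_limit:
  assumes "\<And>n. \<sigma>s n \<in> splittings \<T>" "\<And>T i. T \<in> \<T> \<Longrightarrow> (\<lambda>n. \<sigma>s n T i) \<longlonglongrightarrow> \<sigma> T i"
  shows "\<sigma> \<in> splittings \<T>"
  unfolding splittings_def
proof (intro CollectI ballI conjI allI impI)
  fix T i assume T: "T \<in> \<T>"
  show "0 \<le> \<sigma> T i"
    using assms splittingsD(1)[OF _ T] by (intro LIMSEQ_le_const[OF assms(2)[OF T]]) auto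
  show "\<sigma> T i = 0" if "i \<notin> T"
  proof -
    have "(\<lambda>n. \<sigma>s n T i) = (\<lambda>n. 0)"
      using splittingsD(2)[OF assms(1) T that] by simp
    then show ?thesis using LIMSEQ_unique[OF assms(2)[OF T]] by simp
  qed
  have "(\<lambda>n. \<Sum>i\<in>T. \<sigma>s n T i) \<longlonglongrightarrow> (\<Sum>i\<in>T. \<sigma> T i)"
    using assms(2)[OF T] by (intro tendsto_sum) auto
  then show "(\<Sum>i\<in>T. \<sigma> T i) = 1"
    using splittingsD(3)[OF assms(1) T] LIMSEQ_unique[OF _ tendsto_const] by simp
qed

lemma splittings_attains_min:
  fixes g :: "(nat set \<Rightarrow> nat \<Rightarrow> real) \<Rightarrow> real"
  assumes fin: "finite \<T>" "\<And>T. T \<in> \<T> \<Longrightarrow> T \<noteq> {} \<and> finite T"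
    and bdd: "bdd_below (g ` splittings \<T>)"
    and cont: "\<And>\<sigma>s \<sigma>. (\<And>T i. T \<in> \<T> \<Longrightarrow> (\<lambda>n. \<sigma>s n T i) \<longlonglongrightarrow> \<sigma> T i) \<Longrightarrow>
                 (\<lambda>n. g (\<sigma>s n)) \<longlonglongrightarrow> g \<sigma>"
  shows "\<exists>\<sigma>\<in>splittings \<T>. \<forall>\<tau>\<in>splittings \<T>. g \<sigma> \<le> g \<tau>"
proof -
  define G where "G = Inf (g ` splittings \<T>)"
  have "(\<lambda>T i. if i = Min T then 1 else 0) \<in> splittings \<T>"
    using fin by (intro point_splitting) auto
  then have ne: "splittings \<T> \<noteq> {}" by blast
  have "\<exists>\<sigma>\<in>splittings \<T>. g \<sigma> < G + 1 / Suc n" for n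
    using cInf_lessD[of "g ` splittings \<T>" "G + 1 / Suc n"] ne unfolding G_def by auto
  then obtain \<sigma>s where \<sigma>s: "\<And>n. \<sigma>s n \<in> splittings \<T>" "\<And>n. g (\<sigma>s n) < G + 1 / Suc n"
    by metis
  have "\<bar>\<sigma>s n T i\<bar> \<le> 1" if "(T, i) \<in> Sigma \<T> id" for n T i
    using that fin splittingsD(1)[OF \<sigma>s(1)] splittings_le_one[OF \<sigma>s(1)] by auto
  moreover have "finite (Sigma \<T> id)" using fin by auto
  ultimately obtain r L where r: "strict_mono r"
    and L: "\<forall>j\<in>Sigma \<T> id. (\<lambda>n. \<sigma>s (r n) (fst j) (snd j)) \<longlonglongrightarrow> L j"
    using finite_bounded_convergent_subseq[of "Sigma \<T> id" "\<lambda>n j. \<sigma>s n (fst j) (snd j)" 1]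
    by fastforce
  define \<sigma> where "\<sigma> T i = (if i \<in> T then L (T, i) else 0)" for T i
  have conv: "(\<lambda>n. \<sigma>s (r n) T i) \<longlonglongrightarrow> \<sigma> T i" if "T \<in> \<T>" for T i
    using L that splittingsD(2)[OF \<sigma>s(1) that] unfolding \<sigma>_def by auto
  have "g \<sigma> \<le> G"
  proof (rule LIMSEQ_le[OF cont[OF conv]])
    show "(\<lambda>n. G + 1 / real (Suc n)) \<longlonglongrightarrow> G"
      using tendsto_add[OF tendsto_const LIMSEQ_inverse_real_of_nat] by (simp add: inverse_eq_divide)
    have "g (\<sigma>s (r n)) \<le> G + 1 / Suc n" for n
      using \<sigma>s(2)[of "r n"] inverse_Suc_subseq_le[OF r, of n] by linarith
    then show "\<exists>N. \<forall>n\<ge>N. g (\<sigma>s (r n)) \<le> G + 1 / real (Suc n)" by blast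
  qed
  moreover have "\<sigma> \<in> splittings \<T>"
    using \<sigma>s(1) conv by (rule splittings_limit)
  ultimately show ?thesis
    using cInf_lower[OF _ bdd] unfolding G_def by (metis image_eqI order_trans)
qed

lemma sum_squares_min_variational:
  fixes a y z :: "nat \<Rightarrow> real"
  assumes "\<And>t. 0 < t \<Longrightarrow> t \<le> 1 \<Longrightarrow>
             (\<Sum>i<m. (a i - y i)\<^sup>2) \<le> (\<Sum>i<m. (a i - (y i + t * (z i - y i)))\<^sup>2)"
  shows "(\<Sum>i<m. (a i - y i) * (z i - y i)) \<le> 0"
proof (rule ccontr)
  define S where "S = (\<Sum>i<m. (a i - y i) * (z i - y i))"
  define Q where "Q = (\<Sum>i<m. (z i - y i)\<^sup>2)"
  assume "\<not> (\<Sum>i<m. (a i - y i) * (z i - y i)) \<le> 0"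
  then have S: "S > 0" unfolding S_def by simp
  have Q: "Q \<ge> 0" unfolding Q_def by (intro sum_nonneg) auto
  define t where "t = min 1 (S / (Q + 1))"
  have t: "0 < t" "t \<le> 1" using S Q unfolding t_def by auto
  have "(\<Sum>i<m. (a i - (y i + t * (z i - y i)))\<^sup>2)
      = (\<Sum>i<m. (a i - y i)\<^sup>2 - 2 * t * ((a i - y i) * (z i - y i)) + t\<^sup>2 * (z i - y i)\<^sup>2)"
    by (intro sum.cong) (auto simp: power2_eq_square algebra_simps)
  also have "\<dots> = (\<Sum>i<m. (a i - y i)\<^sup>2) - 2 * t * S + t\<^sup>2 * Q"
    unfolding S_def Q_def by (simp add: sum.distrib sum_subtractf sum_distrib_left)
  finally have "2 * t * S \<le> t * (t * Q)"
    using assms[OF t] by (simp add: power2_eq_square)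
  then have "2 * S \<le> t * Q" using t by simp
  moreover have "t * Q \<le> S / (Q + 1) * Q" using Q t unfolding t_def by (intro mult_right_mono) auto
  moreover have "S / (Q + 1) * Q < S" using S Q by (simp add: field_simps)
  ultimately show False using S by linarith
qed

lemma argmax_splitting:
  fixes e :: "nat \<Rightarrow> real"
  assumes "\<And>T. T \<in> \<T> \<Longrightarrow> T \<noteq> {} \<and> T \<subseteq> {..<m}"
  shows "\<exists>\<tau>\<in>splittings \<T>. \<forall>T\<in>\<T>. (\<Sum>i<m. e i * \<tau> T i) = Max (e ` T)"
proof -
  define j where "j T = (SOME i. i \<in> T \<and> e i = Max (e ` T))" for T
  have j: "j T \<in> T \<and> e (j T) = Max (e ` T)" if "T \<in> \<T>" for T
  proof -
    have "Max (e ` T) \<in> e ` T"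
      using assms[OF that] finite_subset by (intro Max_in) auto
    then have "\<exists>i. i \<in> T \<and> e i = Max (e ` T)" by auto
    then show ?thesis unfolding j_def by (rule someI_ex)
  qed
  define \<tau> where "\<tau> T i = (if i = j T then 1 else (0::real))" for T i
  have "\<tau> \<in> splittings \<T>"
    unfolding \<tau>_def using j assms finite_subset by (intro point_splitting) blast
  moreover have "(\<Sum>i<m. e i * \<tau> T i) = Max (e ` T)" if "T \<in> \<T>" for T
  proof -
    have "j T < m" using j assms that by blast
    then show ?thesis using j[OF that] by (simp add: \<tau>_def if_distrib[of "(*) _"] cong: if_cong)
  qed
  ultimately show ?thesis by blast
qed

(* Project a onto the compact convex set of masses reachable by splittings.  At the projection,
   compare with the splitting putting the whole mass of each T on a maximiser of the residual e:
   the hypothesis then forces the sum of the e i^2 to vanish. *)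
lemma splitting_exists:
  fixes \<T> :: "nat set set" and M :: "nat set \<Rightarrow> real" and a :: "nat \<Rightarrow> real"
  assumes fin: "finite \<T>" and \<T>: "\<And>T. T \<in> \<T> \<Longrightarrow> T \<noteq> {} \<and> T \<subseteq> {..<m}"
    and hyp: "\<And>e. (\<Sum>i<m. e i * a i) \<le> (\<Sum>T\<in>\<T>. M T * Max (e ` T))"
  shows "\<exists>\<sigma>\<in>splittings \<T>. \<forall>i<m. (\<Sum>T\<in>\<T>. M T * \<sigma> T i) = a i"
proof -
  have Tfin: "T \<noteq> {} \<and> finite T" if "T \<in> \<T>" for T
    using \<T>[OF that] finite_subset by blast
  define P where "P \<sigma> i = (\<Sum>T\<in>\<T>. M T * \<sigma> T i)" for \<sigma> :: "nat set \<Rightarrow> nat \<Rightarrow> real" and i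
  define g where "g \<sigma> = (\<Sum>i<m. (a i - P \<sigma> i)\<^sup>2)" for \<sigma>
  have "\<exists>\<sigma>\<in>splittings \<T>. \<forall>\<tau>\<in>splittings \<T>. g \<sigma> \<le> g \<tau>"
  proof (rule splittings_attains_min[OF fin Tfin])
    show "bdd_below (g ` splittings \<T>)"
      by (rule bdd_belowI[of _ 0]) (auto simp: g_def intro: sum_nonneg)
    show "(\<lambda>n. g (\<sigma>s n)) \<longlonglongrightarrow> g \<sigma>"
      if "\<And>T i. T \<in> \<T> \<Longrightarrow> (\<lambda>n. \<sigma>s n T i) \<longlonglongrightarrow> \<sigma> T i" for \<sigma>s \<sigma>
      unfolding g_def P_def by (intro tendsto_intros that)
  qed
  then obtain \<sigma> where \<sigma>: "\<sigma> \<in> splittings \<T>" and min: "\<And>\<tau>. \<tau> \<in> splittings \<T> \<Longrightarrow> g \<sigma> \<le> g \<tau>"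
    by blast
  define e where "e i = a i - P \<sigma> i" for i
  obtain \<tau> where \<tau>: "\<tau> \<in> splittings \<T>" and \<tau>_max: "\<And>T. T \<in> \<T> \<Longrightarrow> (\<Sum>i<m. e i * \<tau> T i) = Max (e ` T)"
    using argmax_splitting[OF \<T>] by blast
  have "(\<Sum>i<m. e i * (P \<tau> i - P \<sigma> i)) \<le> 0"
    unfolding e_def
  proof (rule sum_squares_min_variational)
    fix t :: real assume "0 < t" "t \<le> 1"
    then have "(\<lambda>T i. \<sigma> T i + t * (\<tau> T i - \<sigma> T i)) \<in> splittings \<T>"
      by (intro splittings_segment \<sigma> \<tau>) auto
    moreover have "P (\<lambda>T i. \<sigma> T i + t * (\<tau> T i - \<sigma> T i)) i = P \<sigma> i + t * (P \<tau> i - P \<sigma> i)" for i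
      unfolding P_def
      by (simp add: sum.distrib sum_subtractf sum_distrib_left algebra_simps)
    ultimately show "(\<Sum>i<m. (a i - P \<sigma> i)\<^sup>2) \<le> (\<Sum>i<m. (a i - (P \<sigma> i + t * (P \<tau> i - P \<sigma> i)))\<^sup>2)"
      using min[of "\<lambda>T i. \<sigma> T i + t * (\<tau> T i - \<sigma> T i)"] unfolding g_def by simp
  qed
  moreover have "(\<Sum>i<m. e i * P \<tau> i) = (\<Sum>T\<in>\<T>. M T * (\<Sum>i<m. e i * \<tau> T i))"
    unfolding P_def by (simp add: sum_distrib_left sum.swap[of _ "{..<m}"] algebra_simps)
  then have "(\<Sum>i<m. e i * P \<tau> i) = (\<Sum>T\<in>\<T>. M T * Max (e ` T))"
    using \<tau>_max by simp
  ultimately have "(\<Sum>i<m. e i * (a i - P \<sigma> i)) \<le> 0"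
    using hyp[of e] by (simp add: right_diff_distrib sum_subtractf)
  then have "(\<Sum>i<m. (e i)\<^sup>2) \<le> 0"
    unfolding e_def by (simp add: power2_eq_square)
  then have "\<forall>i<m. e i = 0"
    using sum_nonneg_eq_0_iff[of "{..<m}" "\<lambda>i. (e i)\<^sup>2"] by (simp add: order_antisym sum_nonneg)
  then show ?thesis using \<sigma> unfolding e_def P_def by auto
qed

section \<open>Densities and transport plans\<close>

lemma Ffun_density:
  assumes v: "v \<in> borel_measurable borel" "\<forall>x. 0 \<le> v x"
  shows "Ffun f \<Omega> (density lborel (\<lambda>x. ennreal (v x))) = (\<integral>\<^sup>+x\<in>\<Omega>. ennreal (f (v x)) \<partial>lborel)"
proof -
  let ?F = "\<lambda>w. \<integral>\<^sup>+x\<in>\<Omega>. ennreal (f (w x)) \<partial>lborel"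
  let ?S = "{w. w \<in> borel_measurable borel \<and> (\<forall>x. 0 \<le> w x) \<and>
               density lborel (\<lambda>x. ennreal (v x)) = density lborel (\<lambda>x. ennreal (w x))}"
  have "?F w = ?F v" if w: "w \<in> ?S" for w
  proof -
    have "AE x in lborel. ennreal (w x) = ennreal (v x)"
      using w by (intro sigma_finite_measure.density_unique[OF sigma_finite_lborel])
        (use v(1) in auto)
    then have "AE x in lborel. w x = v x"
      by eventually_elim (use v(2) w in \<open>simp add: ennreal_inj\<close>)
    then show ?thesis by (intro nn_integral_cong_AE) (auto elim: eventually_mono)
  qed
  then have "Ffun f \<Omega> (density lborel (\<lambda>x. ennreal (v x))) = (INF w\<in>?S. ?F v)"
    unfolding Ffun_def by (intro INF_cong) auto
  also have "\<dots> = ?F v"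
    using v by (subst INF_constant) auto
  finally show ?thesis .
qed

lemma prob_on_densityD:
  assumes "density lborel (\<lambda>x. ennreal (v x)) \<in> prob_on \<Omega>" "v \<in> borel_measurable borel"
    "\<forall>x. 0 \<le> v x" "\<Omega> \<in> sets borel"
  shows "(\<integral>\<^sup>+x. ennreal (v x) \<partial>lborel) = 1" and "AE x in lborel. x \<notin> \<Omega> \<longrightarrow> v x = 0"
proof -
  from assms(1) have "prob_space (density lborel (\<lambda>x. ennreal (v x)))"
    and out: "emeasure (density lborel (\<lambda>x. ennreal (v x))) (- \<Omega>) = 0"
    unfolding prob_on_def by auto
  then have "emeasure (density lborel (\<lambda>x. ennreal (v x))) UNIV = 1"
    using prob_space.emeasure_space_1 by fastforce
  then show "(\<integral>\<^sup>+x. ennreal (v x) \<partial>lborel) = 1"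
    using assms(2) by (simp add: emeasure_density)
  have "(\<integral>\<^sup>+x. ennreal (v x) * indicator (- \<Omega>) x \<partial>lborel) = 0"
    using out assms(2,4) by (subst (asm) emeasure_density) auto
  then have "AE x in lborel. ennreal (v x) * indicator (- \<Omega>) x = 0"
    using assms(2,4) by (subst (asm) nn_integral_0_iff_AE) auto
  then show "AE x in lborel. x \<notin> \<Omega> \<longrightarrow> v x = 0"
    by eventually_elim (use assms(3) in \<open>auto simp: indicator_def\<close>)
qed

lemma prob_on_densityI:
  assumes "v \<in> borel_measurable borel" "(\<integral>\<^sup>+x. ennreal (v x) \<partial>lborel) = 1"
    "\<And>x. x \<notin> \<Omega> \<Longrightarrow> v x = 0" "\<Omega> \<in> sets borel"
  shows "density lborel (\<lambda>x. ennreal (v x)) \<in> prob_on \<Omega>"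
  unfolding prob_on_def
proof (intro CollectI conjI)
  show "prob_space (density lborel (\<lambda>x. ennreal (v x)))"
    by standard (use assms(1,2) in \<open>simp add: emeasure_density\<close>)
  have "(\<lambda>x. ennreal (v x) * indicator (- \<Omega>) x) = (\<lambda>x. 0)"
    using assms(3) by (force simp: indicator_def)
  then show "emeasure (density lborel (\<lambda>x. ennreal (v x))) (- \<Omega>) = 0"
    using assms(1,4) by (subst emeasure_density) auto
qed simp

lemma ennreal_integral_le_nn_integral:
  fixes g h :: "'a \<Rightarrow> real"
  assumes "integrable M g" "AE x in M. g x \<le> h x"
  shows "ennreal (integral\<^sup>L M g) \<le> (\<integral>\<^sup>+x. ennreal (h x) \<partial>M)"
proof -
  have "ennreal (integral\<^sup>L M g) \<le> ennreal (\<integral>x. max 0 (g x) \<partial>M)"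
    using assms(1) by (intro ennreal_leI integral_mono) auto
  also have "\<dots> = (\<integral>\<^sup>+x. ennreal (max 0 (g x)) \<partial>M)"
    using assms(1) by (intro nn_integral_eq_integral[symmetric]) auto
  also have "\<dots> \<le> (\<integral>\<^sup>+x. ennreal (h x) \<partial>M)"
    using assms(2) by (intro nn_integral_mono_AE) (auto elim!: eventually_mono intro: ennreal_leI)
  finally show ?thesis .
qed

lemma ennreal_add_le:
  assumes "0 \<le> b"
  shows "ennreal (a + b) \<le> ennreal a + ennreal b"
proof (cases "0 \<le> a")
  case True
  then show ?thesis using assms by (simp add: ennreal_plus)
next
  case False
  then have "ennreal (a + b) \<le> ennreal b" by (intro ennreal_leI) simp
  also have "\<dots> \<le> ennreal a + ennreal b" by simp
  finally show ?thesis .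
qed

context
  fixes \<gamma> :: "('a::euclidean_space \<times> 'a) measure" and \<rho> \<nu> :: "'a measure"
  assumes \<gamma>: "\<gamma> \<in> transport_plans \<rho> \<nu>"
begin

lemma sets_transport_plan: "sets \<gamma> = sets borel"
  using \<gamma> unfolding transport_plans_def by auto

lemma measurable_transport_plan:
  "g \<in> borel_measurable borel \<Longrightarrow> g \<in> borel_measurable \<gamma>"
  "fst \<in> \<gamma> \<rightarrow>\<^sub>M borel" "snd \<in> \<gamma> \<rightarrow>\<^sub>M borel"
  using measurable_cong_sets[OF sets_transport_plan refl] borel_measurable_continuous_onI[OF continuous_on_fst]
    borel_measurable_continuous_onI[OF continuous_on_snd] by (blast intro: continuous_on_id)+

lemma integral_transport_plan_fst: "(\<integral>z. g (fst z) \<partial>\<gamma>) = (\<integral>x. g x \<partial>\<rho>)"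
  if "g \<in> borel_measurable borel" for g :: "'a \<Rightarrow> real"
  using \<gamma> integral_distr[OF measurable_transport_plan(2) that] unfolding transport_plans_def by simp

lemma integral_transport_plan_snd: "(\<integral>z. g (snd z) \<partial>\<gamma>) = (\<integral>y. g y \<partial>\<nu>)"
  if "g \<in> borel_measurable borel" for g :: "'a \<Rightarrow> real"
  using \<gamma> integral_distr[OF measurable_transport_plan(3) that] unfolding transport_plans_def by simp

lemma AE_transport_plan_fst: "AE x in \<rho>. P x \<Longrightarrow> AE z in \<gamma>. P (fst z)"
  using \<gamma> AE_distrD[OF measurable_transport_plan(2), of P] unfolding transport_plans_def by auto

lemma AE_transport_plan_snd: "AE y in \<nu>. P y \<Longrightarrow> AE z in \<gamma>. P (snd z)"
  using \<gamma> AE_distrD[OF measurable_transport_plan(3), of P] unfolding transport_plans_def by auto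

end

lemma diff_powr_pos_iff_ball:
  fixes x y :: "'a::metric_space"
  assumes "p > 0"
  shows "c - dist y x powr p > 0 \<longleftrightarrow> c > 0 \<and> y \<in> ball x (c powr (1 / p))"
proof -
  have "dist y x powr p < c \<longleftrightarrow> c > 0 \<and> dist y x < c powr (1 / p)"
  proof (cases "c > 0")
    case True
    have inv: "(dist y x powr p) powr (1 / p) = dist y x" "(c powr (1 / p)) powr p = c"
      using assms True by (simp_all add: powr_powr)
    have "dist y x powr p < c \<longleftrightarrow> (dist y x powr p) powr (1 / p) < c powr (1 / p)"
    proof
      show "dist y x powr p < c \<Longrightarrow> (dist y x powr p) powr (1 / p) < c powr (1 / p)"
        using assms by (intro powr_less_mono2) auto
      assume "(dist y x powr p) powr (1 / p) < c powr (1 / p)"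
      then have "dist y x powr p < (c powr (1 / p)) powr p"
        using assms inv by (intro powr_less_mono2) auto
      then show "dist y x powr p < c" using inv by simp
    qed
    also have "\<dots> \<longleftrightarrow> dist y x < c powr (1 / p)"
      using inv by simp
    finally show ?thesis using True by simp
  next
    case False
    have "0 \<le> dist y x powr p" by simp
    then show ?thesis using False by linarith
  qed
  then show ?thesis by (simp add: dist_commute)
qed

lemma bounded_domain_pos_measure:
  assumes "bounded_domain \<Omega>"
  shows "0 < emeasure lborel \<Omega>"
proof -
  obtain U where U: "open U" "U \<noteq> {}" "\<Omega> = closure U"
    using assms unfolding bounded_domain_def by blast
  have "U \<notin> null_sets lborel"
    using open_not_negligible[OF U(1,2)] null_sets_completionI
    unfolding negligible_iff_null_sets by blast
  then have "0 < emeasure lborel U"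
    using U(1) by (simp add: null_sets_def zero_less_iff_neq_zero)
  also have "\<dots> \<le> emeasure lborel \<Omega>"
    using U closure_subset by (intro emeasure_mono) auto
  finally show ?thesis .
qed

section \<open>The semi-discrete problem and its dual\<close>

locale semidiscrete_problem = convex_integrand f f' k
  for f f' k :: "real \<Rightarrow> real" +
  fixes \<Omega> :: "'a::euclidean_space set" and p :: real
    and m :: nat and a :: "nat \<Rightarrow> real" and xs :: "nat \<Rightarrow> 'a" and \<nu> :: "'a measure"
  assumes domain: "bounded_domain \<Omega>"
    and p: "p \<ge> 1"
    and atoms: "\<forall>i<m. xs i \<in> \<Omega> \<and> a i > 0"
    and atoms_distinct: "inj_on xs {..<m}"
    and a_sum: "(\<Sum>i<m. a i) = 1"
    and \<nu>_sets: "sets \<nu> = sets borel"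
    and \<nu>_def: "\<forall>A\<in>sets borel. emeasure \<nu> A = (\<Sum>i<m. ennreal (a i) * indicator A (xs i))"
begin

lemma m_pos: "m > 0"
  using a_sum by (cases m) auto

lemma a_pos: "i < m \<Longrightarrow> a i > 0"
  using atoms by auto

lemma a_le_1: "i < m \<Longrightarrow> a i \<le> 1"
  using member_le_sum[of i "{..<m}" a] a_pos a_sum by (simp add: less_imp_le)

lemma xs_in: "i < m \<Longrightarrow> xs i \<in> \<Omega>"
  using atoms by auto

lemma bounded_\<Omega>: "bounded \<Omega>"
  using domain unfolding bounded_domain_def by auto

lemma sets_\<Omega>[measurable]: "\<Omega> \<in> sets borel"
  using domain unfolding bounded_domain_def by (auto intro: borel_closed)

definition L\<Omega> :: "'a measure" where "L\<Omega> = restrict_space lborel \<Omega>"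

definition vol :: real where "vol = measure lborel \<Omega>"

lemma space_L\<Omega>: "space L\<Omega> = \<Omega>"
  unfolding L\<Omega>_def by (simp add: space_restrict_space)

lemma emeasure_L\<Omega>: "emeasure L\<Omega> \<Omega> = emeasure lborel \<Omega>"
  unfolding L\<Omega>_def by (rule emeasure_restrict_space) auto

lemma vol_pos: "vol > 0"
  using bounded_domain_pos_measure[OF domain] emeasure_bounded_finite[OF bounded_\<Omega>]
  unfolding vol_def by (simp add: measure_def enn2real_positive_iff)

sublocale L\<Omega>: finite_measure L\<Omega>
  by standard (use emeasure_L\<Omega> emeasure_bounded_finite[OF bounded_\<Omega>] in \<open>simp add: space_L\<Omega>\<close>)

lemma measurable_L\<Omega>: "g \<in> borel_measurable borel \<Longrightarrow> g \<in> borel_measurable L\<Omega>"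
  unfolding L\<Omega>_def by (rule measurable_restrict_space1) simp

lemma measure_L\<Omega>[simp]: "measure L\<Omega> (space L\<Omega>) = vol"
  using emeasure_L\<Omega> by (simp add: measure_def vol_def space_L\<Omega>)

lemma integral_L\<Omega>: "integral\<^sup>L L\<Omega> g = (\<integral>x. indicator \<Omega> x * g x \<partial>lborel)"
  for g :: "'a \<Rightarrow> real"
  unfolding L\<Omega>_def by (subst integral_restrict_space) auto

lemma integrable_L\<Omega>_iff: "integrable L\<Omega> g \<longleftrightarrow> integrable lborel (\<lambda>x. indicator \<Omega> x * g x)"
  for g :: "'a \<Rightarrow> real"
  unfolding L\<Omega>_def by (subst integrable_restrict_space) auto

lemma integrable_L\<Omega>_bounded:
  fixes g :: "'a \<Rightarrow> real"
  assumes "g \<in> borel_measurable borel" "\<And>x. x \<in> \<Omega> \<Longrightarrow> \<bar>g x\<bar> \<le> B"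
  shows "integrable L\<Omega> g"
  by (rule L\<Omega>.integrable_const_bound[where B=B]) (use assms measurable_L\<Omega> space_L\<Omega> in auto)

definition cost :: "nat \<Rightarrow> 'a \<Rightarrow> real" where "cost i x = dist x (xs i) powr p"

lemma borel_measurable_cost[measurable]: "cost i \<in> borel_measurable borel"
  unfolding cost_def by measurable

lemma cost_nonneg: "cost i x \<ge> 0"
  unfolding cost_def by simp

lemma cost_le_diameter: "x \<in> \<Omega> \<Longrightarrow> i < m \<Longrightarrow> cost i x \<le> diameter \<Omega> powr p"
  unfolding cost_def using p diameter_bounded_bound[OF bounded_\<Omega> _ xs_in]
  by (intro powr_mono2) auto

definition potential :: "(nat \<Rightarrow> real) \<Rightarrow> 'a \<Rightarrow> real" where
  "potential l x = Max ((\<lambda>i. l i - cost i x) ` {..<m})"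

definition lmax :: "(nat \<Rightarrow> real) \<Rightarrow> real" where "lmax l = Max (l ` {..<m})"

lemma borel_measurable_potential[measurable]: "potential l \<in> borel_measurable borel"
  unfolding potential_def by measurable

lemma potential_ge: "i < m \<Longrightarrow> l i - cost i x \<le> potential l x"
  unfolding potential_def by (intro Max_ge) auto

lemma potential_attained: "\<exists>i<m. potential l x = l i - cost i x"
proof -
  have "potential l x \<in> (\<lambda>i. l i - cost i x) ` {..<m}"
    unfolding potential_def using m_pos by (intro Max_in) auto
  then show ?thesis by auto
qed

lemma lmax_ge: "i < m \<Longrightarrow> l i \<le> lmax l"
  unfolding lmax_def by (intro Max_ge) auto

lemma lmax_attained: "\<exists>i<m. lmax l = l i"
proof -
  have "lmax l \<in> l ` {..<m}" unfolding lmax_def using m_pos by (intro Max_in) auto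
  then show ?thesis by auto
qed

lemma potential_le_lmax: "potential l x \<le> lmax l"
  using potential_attained[of l x] lmax_ge cost_nonneg by (metis diff_le_eq le_add_same_cancel1 order_trans)

lemma lmax_le_potential: "x \<in> \<Omega> \<Longrightarrow> lmax l - diameter \<Omega> powr p \<le> potential l x"
  using lmax_attained[of l] potential_ge[of _ l x] cost_le_diameter[of x]
  by (metis diff_left_mono order_trans)

lemma potential_lipschitz: "\<bar>potential l x - potential l' x\<bar> \<le> (\<Sum>i<m. \<bar>l i - l' i\<bar>)"
proof -
  have "potential l x - potential l' x \<le> (\<Sum>i<m. \<bar>l i - l' i\<bar>)" for l l'
  proof -
    obtain i where i: "i < m" "potential l x = l i - cost i x"
      using potential_attained by blast
    have "\<bar>l i - l' i\<bar> \<le> (\<Sum>i<m. \<bar>l i - l' i\<bar>)"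
      using i(1) by (intro member_le_sum) auto
    then show ?thesis using i potential_ge[OF i(1), of l' x] by linarith
  qed
  from this[of l l'] this[of l' l] show ?thesis by (simp add: abs_minus_commute abs_le_iff)
qed

lemma potential_bounded: "x \<in> \<Omega> \<Longrightarrow> \<bar>potential l x\<bar> \<le> \<bar>lmax l\<bar> + diameter \<Omega> powr p"
  using potential_le_lmax[of l x] lmax_le_potential[of x l] by linarith

lemma kplus_potential_eq:
  "kplus (potential l y) = k (Max (insert 0 ((\<lambda>i. l i - dist y (xs i) powr p) ` {..<m})))"
  unfolding kplus_def potential_def cost_def using m_pos by (subst Max_insert) auto

lemma kplus_potential_pos_iff:
  "kplus (potential l y) > 0 \<longleftrightarrow> (\<exists>i<m. l i > 0 \<and> y \<in> ball (xs i) (l i powr (1 / p)))"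
proof -
  have "kplus (potential l y) > 0 \<longleftrightarrow> potential l y > 0"
    by (rule kplus_pos_iff)
  also have "\<dots> \<longleftrightarrow> (\<exists>i<m. l i - dist y (xs i) powr p > 0)"
    unfolding potential_def cost_def using m_pos by (subst Max_gr_iff) auto
  also have "\<dots> \<longleftrightarrow> (\<exists>i<m. l i > 0 \<and> y \<in> ball (xs i) (l i powr (1 / p)))"
    using diff_powr_pos_iff_ball[of p] p by (intro ex_cong1 conj_cong refl) simp
  finally show ?thesis .
qed

definition dual :: "(nat \<Rightarrow> real) \<Rightarrow> real" where
  "dual l = (\<Sum>i<m. l i * a i) - (\<integral>x. fstar (potential l x) \<partial>L\<Omega>)"

lemma fstar_potential_bounds: "0 \<le> fstar (potential l x) \<and> fstar (potential l x) \<le> fstar (lmax l)"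
  using fstar_nonneg fstar_mono[OF potential_le_lmax] by simp

lemma integrable_fstar_potential: "integrable L\<Omega> (\<lambda>x. fstar (potential l x))"
  by (rule integrable_L\<Omega>_bounded[where B="fstar (lmax l)"]) (use fstar_potential_bounds in auto)

lemma integral_fstar_potential_nonneg: "(\<integral>x. fstar (potential l x) \<partial>L\<Omega>) \<ge> 0"
  using fstar_potential_bounds by (intro integral_nonneg_AE) auto

lemma sum_levels_le_lmax: "(\<Sum>i<m. l i * a i) \<le> lmax l"
proof -
  have "(\<Sum>i<m. l i * a i) \<le> (\<Sum>i<m. lmax l * a i)"
    using lmax_ge a_pos by (intro sum_mono mult_right_mono) (auto intro: less_imp_le)
  also have "\<dots> = lmax l" using a_sum by (simp add: sum_distrib_left[symmetric])
  finally show ?thesis .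
qed

lemma dual_le_lmax: "dual l \<le> lmax l"
  unfolding dual_def using sum_levels_le_lmax[of l] integral_fstar_potential_nonneg[of l] by linarith

lemma dual_le_coercive: "dual l \<le> 2 * diameter \<Omega> powr p + vol * f (2 / vol) - lmax l"
proof -
  define t where "t = 2 / vol"
  have t: "t \<ge> 0" unfolding t_def using vol_pos by simp
  have "(lmax l - diameter \<Omega> powr p) * t - f t \<le> fstar (potential l x)" if "x \<in> \<Omega>" for x
    using fenchel_young[OF t] fstar_mono[OF lmax_le_potential[OF that]] order_trans by blast
  then have "(\<integral>x. (lmax l - diameter \<Omega> powr p) * t - f t \<partial>L\<Omega>) \<le> (\<integral>x. fstar (potential l x) \<partial>L\<Omega>)"
    using space_L\<Omega> by (intro integral_mono integrable_fstar_potential) auto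
  moreover have "vol * ((lmax l - diameter \<Omega> powr p) * t - f t)
      = 2 * (lmax l - diameter \<Omega> powr p) - vol * f t"
    unfolding t_def using vol_pos by (simp add: field_simps)
  ultimately show ?thesis
    unfolding dual_def t_def[symmetric] using sum_levels_le_lmax[of l]
    by simp
qed

lemma dual_le_atom:
  assumes "i < m"
  shows "dual l \<le> a i * l i + (1 - a i) * lmax l"
proof -
  have "(\<Sum>j<m. l j * a j) = l i * a i + (\<Sum>j\<in>{..<m} - {i}. l j * a j)"
    using assms by (simp add: sum.remove)
  also have "(\<Sum>j\<in>{..<m} - {i}. l j * a j) \<le> (\<Sum>j\<in>{..<m} - {i}. lmax l * a j)"
    using lmax_ge a_pos by (intro sum_mono mult_right_mono) (auto intro: less_imp_le)
  also have "(\<Sum>j\<in>{..<m} - {i}. lmax l * a j) = lmax l * (1 - a i)"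
    using a_sum assms by (simp add: sum_distrib_left[symmetric] sum_diff1)
  finally show ?thesis
    unfolding dual_def using integral_fstar_potential_nonneg[of l] by (simp add: algebra_simps)
qed

lemma dual_lipschitz:
  assumes "lmax l \<le> B" "lmax l' \<le> B"
  shows "\<bar>dual l - dual l'\<bar> \<le> (1 + vol * kplus B) * (\<Sum>i<m. \<bar>l i - l' i\<bar>)"
proof -
  define S where "S = (\<Sum>i<m. \<bar>l i - l' i\<bar>)"
  have "\<bar>(\<Sum>i<m. l i * a i) - (\<Sum>i<m. l' i * a i)\<bar> \<le> (\<Sum>i<m. \<bar>(l i - l' i) * a i\<bar>)"
    by (simp add: sum_subtractf[symmetric] left_diff_distrib sum_abs)
  also have "\<dots> \<le> S"
    unfolding S_def using a_pos a_le_1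
    by (intro sum_mono) (simp add: abs_mult mult_left_le less_imp_le)
  finally have levels: "\<bar>(\<Sum>i<m. l i * a i) - (\<Sum>i<m. l' i * a i)\<bar> \<le> S" .
  have "\<bar>fstar (potential l x) - fstar (potential l' x)\<bar> \<le> kplus B * S" for x
  proof -
    have "max (kplus (potential l' x)) (kplus (potential l x)) \<le> kplus B"
      using kplus_mono potential_le_lmax assms by (metis max.bounded_iff order_trans)
    then show ?thesis
      using fstar_lipschitz[of "potential l' x" "potential l x"] potential_lipschitz[of l x l']
        kplus_nonneg unfolding S_def by (smt (verit) mult_mono zero_le_mult_iff max.cobounded1)
  qed
  then have "\<bar>\<integral>x. fstar (potential l x) - fstar (potential l' x) \<partial>L\<Omega>\<bar> \<le> (\<integral>x. kplus B * S \<partial>L\<Omega>)"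
    by (intro integral_abs_bound_integral Bochner_Integration.integrable_diff
        integrable_fstar_potential) auto
  then have "\<bar>(\<integral>x. fstar (potential l x) \<partial>L\<Omega>) - (\<integral>x. fstar (potential l' x) \<partial>L\<Omega>)\<bar> \<le> vol * kplus B * S"
    using integrable_fstar_potential by (simp add: mult.assoc)
  then show ?thesis
    unfolding dual_def using levels by (simp add: algebra_simps S_def[symmetric])
qed

lemma dual_superlevel_bounded: "\<exists>B. \<forall>l. c \<le> dual l \<longrightarrow> (\<forall>i<m. \<bar>l i\<bar> \<le> B)"
proof -
  define K where "K = 2 * diameter \<Omega> powr p + vol * f (2 / vol)"
  define amin where "amin = Min (a ` {..<m})"
  have "amin \<in> a ` {..<m}"
    unfolding amin_def using m_pos by (intro Min_in) auto
  then have amin: "0 < amin" "\<And>i. i < m \<Longrightarrow> amin \<le> a i"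
    using a_pos unfolding amin_def by auto
  have "\<bar>l i\<bar> \<le> \<bar>K - c\<bar> + (\<bar>c\<bar> + \<bar>K - c\<bar>) / amin" if l: "c \<le> dual l" and i: "i < m" for l i
  proof -
    have up: "l i \<le> K - c"
      using lmax_ge[OF i, of l] dual_le_coercive[of l] l unfolding K_def by linarith
    have ai: "0 < a i" "a i \<le> 1" using a_pos a_le_1 i by auto
    have "(1 - a i) * lmax l \<le> (1 - a i) * \<bar>K - c\<bar>"
      using dual_le_coercive[of l] l ai unfolding K_def by (intro mult_left_mono) auto
    also have "\<dots> \<le> \<bar>K - c\<bar>"
      using ai by (intro mult_left_le_one_le) auto
    finally have "(1 - a i) * lmax l \<le> \<bar>K - c\<bar>" .
    then have "a i * l i \<ge> - (\<bar>c\<bar> + \<bar>K - c\<bar>)"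
      using dual_le_atom[OF i, of l] l by linarith
    then have "l i \<ge> - (\<bar>c\<bar> + \<bar>K - c\<bar>) / a i"
      using ai by (simp add: divide_le_eq mult.commute)
    moreover have "(\<bar>c\<bar> + \<bar>K - c\<bar>) / a i \<le> (\<bar>c\<bar> + \<bar>K - c\<bar>) / amin"
      using amin ai i by (intro divide_left_mono) auto
    moreover have "0 \<le> (\<bar>c\<bar> + \<bar>K - c\<bar>) / amin" using amin by simp
    ultimately show ?thesis using up by linarith
  qed
  then show ?thesis by blast
qed

lemma dual_tendsto:
  assumes "\<And>n. lmax (L n) \<le> B" "lmax l \<le> B" "\<And>i. i < m \<Longrightarrow> (\<lambda>n. L n i) \<longlonglongrightarrow> l i"
  shows "(\<lambda>n. dual (L n)) \<longlonglongrightarrow> dual l"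
proof -
  define K where "K = 1 + vol * kplus B"
  have "(\<lambda>n. K * (\<Sum>i<m. \<bar>L n i - l i\<bar>)) \<longlonglongrightarrow> K * (\<Sum>i<m. \<bar>l i - l i\<bar>)"
    using assms(3) by (intro tendsto_intros) auto
  then have lim: "(\<lambda>n. K * (\<Sum>i<m. \<bar>L n i - l i\<bar>)) \<longlonglongrightarrow> 0" by simp
  have "\<forall>n. norm (dual (L n) - dual l) \<le> K * (\<Sum>i<m. \<bar>L n i - l i\<bar>)"
    unfolding K_def using assms(1,2) dual_lipschitz by simp
  then have "(\<lambda>n. dual (L n) - dual l) \<longlonglongrightarrow> 0"
    by (rule Lim_null_comparison[OF always_eventually lim])
  then show ?thesis by (simp add: LIM_zero_iff)
qed

lemma dual_has_max: "\<exists>l. \<forall>l'. dual l' \<le> dual l"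
proof -
  define S where "S = Sup (range dual)"
  define K where "K = 2 * diameter \<Omega> powr p + vol * f (2 / vol)"
  have "dual l \<le> K / 2" for l
    using dual_le_lmax[of l] dual_le_coercive[of l] unfolding K_def by (simp add: field_simps)
  then have bdd: "bdd_above (range dual)"
    by (intro bdd_aboveI2)
  have le_S: "dual l \<le> S" for l
    unfolding S_def using bdd by (intro cSup_upper) auto
  have "\<exists>l. S - 1 / Suc n < dual l" for n
    using less_cSupD[of "range dual" "S - 1 / Suc n"] unfolding S_def by auto
  then obtain ls where ls: "\<And>n. S - 1 / Suc n < dual (ls n)" by metis
  have ge: "dual (\<lambda>_. 0) - 1 \<le> dual (ls n)" for n
  proof -
    have "1 / real (Suc n) \<le> 1" by simp
    then show ?thesis using ls[of n] le_S[of "\<lambda>_. 0"] by linarith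
  qed
  obtain B where B: "\<And>n i. i < m \<Longrightarrow> \<bar>ls n i\<bar> \<le> B"
    using dual_superlevel_bounded[of "dual (\<lambda>_. 0) - 1"] ge by blast
  then obtain r L where r: "strict_mono r" and L: "\<forall>i\<in>{..<m}. (\<lambda>n. ls (r n) i) \<longlonglongrightarrow> L i"
    using finite_bounded_convergent_subseq[of "{..<m}" ls B] by auto
  have lmax_B: "lmax l \<le> B" if "\<And>i. i < m \<Longrightarrow> l i \<le> B" for l
    using lmax_attained[of l] that by metis
  have "\<bar>L i\<bar> \<le> B" if "i < m" for i
    using L B that by (intro LIMSEQ_le_const2[of "\<lambda>n. \<bar>ls (r n) i\<bar>"] tendsto_rabs) auto
  then have "(\<lambda>n. dual (ls (r n))) \<longlonglongrightarrow> dual L"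
  proof (intro dual_tendsto[where B=B])
    show "lmax (ls (r n)) \<le> B" for n
      using B by (intro lmax_B) (simp add: abs_le_iff)
  qed (use L lmax_B in \<open>auto simp: abs_le_iff\<close>)
  moreover have "(\<lambda>n. S - 1 / real (Suc n)) \<longlonglongrightarrow> S"
    using tendsto_diff[OF tendsto_const LIMSEQ_inverse_real_of_nat] by (simp add: inverse_eq_divide)
  moreover have "S - 1 / real (Suc n) \<le> dual (ls (r n))" for n
    using ls[of "r n"] inverse_Suc_subseq_le[OF r, of n] by linarith
  ultimately have "S \<le> dual L" by (intro LIMSEQ_le) auto
  then show ?thesis using le_S order_trans by blast
qed

section \<open>The atomic target and atomic couplings\<close>

lemma space_\<nu>: "space \<nu> = UNIV"
  using sets_eq_imp_space_eq[OF \<nu>_sets] by simp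

lemma measurable_\<nu>[measurable (raw)]: "g \<in> borel_measurable borel \<Longrightarrow> g \<in> borel_measurable \<nu>"
  by (subst measurable_cong_sets[OF \<nu>_sets refl])

lemma sum_indicator_atoms:
  fixes c :: "nat \<Rightarrow> 'b::semiring_1"
  assumes "j < m"
  shows "(\<Sum>i<m. c i * indicator {xs i} (xs j)) = c j"
proof -
  have "(\<Sum>i<m. c i * indicator {xs i} (xs j)) = (\<Sum>i<m. if i = j then c i else 0)"
    using assms atoms_distinct by (intro sum.cong) (auto simp: indicator_def inj_on_def)
  then show ?thesis using assms by simp
qed

lemma emeasure_\<nu>_atom: "i < m \<Longrightarrow> emeasure \<nu> {xs i} = ennreal (a i)"
proof -
  assume i: "i < m"
  have "emeasure \<nu> {xs i} = (\<Sum>j<m. ennreal (a j) * indicator {xs i} (xs j))"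
    using \<nu>_def by simp
  also have "\<dots> = (\<Sum>j<m. ennreal (a j) * indicator {xs j} (xs i))"
    by (intro sum.cong refl) (auto simp: indicator_def)
  finally show ?thesis using sum_indicator_atoms[OF i] by simp
qed

lemma AE_\<nu>_atoms: "AE y in \<nu>. y \<in> xs ` {..<m}"
proof -
  have X: "- xs ` {..<m} \<in> sets borel"
    by (intro borel_comp borel_closed finite_imp_closed) auto
  then have "emeasure \<nu> (- xs ` {..<m}) = (\<Sum>j<m. ennreal (a j) * indicator (- xs ` {..<m}) (xs j))"
    by (intro \<nu>_def[rule_format])
  also have "\<dots> = 0" by (intro sum.neutral) auto
  finally show ?thesis
    using X by (subst AE_iff_measurable[of "- xs ` {..<m}"]) (auto simp: space_\<nu> \<nu>_sets)
qed

lemma nn_integral_\<nu>: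
  assumes "g \<in> borel_measurable borel"
  shows "(\<integral>\<^sup>+y. g y \<partial>\<nu>) = (\<Sum>i<m. ennreal (a i) * g (xs i))"
proof -
  have "(\<integral>\<^sup>+y. g y \<partial>\<nu>) = (\<integral>\<^sup>+y. (\<Sum>i<m. g (xs i) * indicator {xs i} y) \<partial>\<nu>)"
    using AE_\<nu>_atoms
  proof (intro nn_integral_cong_AE, eventually_elim)
    case (elim y)
    then obtain j where j: "j < m" "y = xs j" by auto
    then show ?case using sum_indicator_atoms[of j "\<lambda>i. g (xs i)"] by simp
  qed
  also have "\<dots> = (\<Sum>i<m. g (xs i) * emeasure \<nu> {xs i})"
    by (subst nn_integral_sum) (auto simp: \<nu>_sets nn_integral_cmult_indicator)
  finally show ?thesis
    by (simp add: emeasure_\<nu>_atom mult.commute)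
qed

lemma prob_space_\<nu>: "prob_space \<nu>"
proof
  have "emeasure \<nu> UNIV = (\<Sum>j<m. ennreal (a j) * indicator UNIV (xs j))"
    by (rule \<nu>_def[rule_format]) simp
  also have "\<dots> = (\<Sum>j<m. ennreal (a j))"
    by simp
  also have "\<dots> = 1" using a_pos a_sum by (subst sum_ennreal) (auto intro: less_imp_le)
  finally show "emeasure \<nu> (space \<nu>) = 1" by (simp add: space_\<nu>)
qed

sublocale \<nu>: prob_space \<nu> by (rule prob_space_\<nu>)

lemma sets_lborel_\<nu>: "sets (lborel \<Otimes>\<^sub>M \<nu>) = sets (borel :: ('a \<times> 'a) measure)"
proof -
  have "sets (lborel \<Otimes>\<^sub>M \<nu>) = sets (borel \<Otimes>\<^sub>M (borel :: 'a measure))"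
    by (rule sets_pair_measure_cong) (simp_all add: \<nu>_sets)
  also have "\<dots> = sets borel"
    unfolding borel_prod ..
  finally show ?thesis .
qed

lemma measurable_lborel_\<nu>[measurable (raw)]:
  fixes g :: "'a \<times> 'a \<Rightarrow> 'b::topological_space"
  assumes "g \<in> borel_measurable borel"
  shows "g \<in> borel_measurable (lborel \<Otimes>\<^sub>M \<nu>)"
  using assms measurable_cong_sets[OF sets_lborel_\<nu> refl] by blast

lemma borel_measurable_fst[measurable]: "fst \<in> (borel :: ('a \<times> 'a) measure) \<rightarrow>\<^sub>M borel"
  and borel_measurable_snd[measurable]: "snd \<in> (borel :: ('a \<times> 'a) measure) \<rightarrow>\<^sub>M borel"
  by (intro borel_measurable_continuous_onI continuous_intros)+

(* The coupling sending the mass w i x dx to the atom xs i; the factor 1 / a i compensates the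
   weight of that atom under \<nu>. *)
definition atomic_plan :: "(nat \<Rightarrow> 'a \<Rightarrow> real) \<Rightarrow> ('a \<times> 'a) measure" where
  "atomic_plan w = density (lborel \<Otimes>\<^sub>M \<nu>)
     (\<lambda>z. ennreal (\<Sum>i<m. w i (fst z) / a i * indicator {xs i} (snd z)))"

context
  fixes w :: "nat \<Rightarrow> 'a \<Rightarrow> real"
  assumes w_meas[measurable]: "\<And>i. w i \<in> borel_measurable borel"
    and w_nonneg: "\<And>i x. 0 \<le> w i x"
begin

lemma sets_atomic_plan: "sets (atomic_plan w) = sets borel"
  unfolding atomic_plan_def using sets_lborel_\<nu> by simp

lemma nn_integral_atomic_plan:
  assumes [measurable]: "g \<in> borel_measurable (borel :: ('a \<times> 'a) measure)"
  shows "(\<integral>\<^sup>+z. g z \<partial>atomic_plan w) = (\<integral>\<^sup>+x. (\<Sum>j<m. ennreal (w j x) * g (x, xs j)) \<partial>lborel)"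
proof -
  define W where "W z = (\<Sum>i<m. w i (fst z) / a i * indicator {xs i} (snd z))" for z :: "'a \<times> 'a"
  have [measurable]: "W \<in> borel_measurable borel"
    unfolding W_def by measurable
  have "(\<integral>\<^sup>+z. g z \<partial>atomic_plan w) = (\<integral>\<^sup>+z. ennreal (W z) * g z \<partial>(lborel \<Otimes>\<^sub>M \<nu>))"
    unfolding atomic_plan_def W_def[symmetric] by (rule nn_integral_density) measurable
  also have "\<dots> = (\<integral>\<^sup>+x. \<integral>\<^sup>+y. ennreal (W (x, y)) * g (x, y) \<partial>\<nu> \<partial>lborel)"
    by (rule \<nu>.nn_integral_fst[symmetric]) measurable
  also have "\<dots> = (\<integral>\<^sup>+x. (\<Sum>j<m. ennreal (w j x) * g (x, xs j)) \<partial>lborel)"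
  proof (rule nn_integral_cong)
    fix x :: 'a
    have "(\<integral>\<^sup>+y. ennreal (W (x, y)) * g (x, y) \<partial>\<nu>)
        = (\<Sum>j<m. ennreal (a j) * (ennreal (W (x, xs j)) * g (x, xs j)))"
      by (rule nn_integral_\<nu>) measurable
    also have "\<dots> = (\<Sum>j<m. ennreal (w j x) * g (x, xs j))"
    proof (intro sum.cong refl)
      fix j assume j: "j \<in> {..<m}"
      have "W (x, xs j) = w j x / a j"
        unfolding W_def fst_conv snd_conv using j by (intro sum_indicator_atoms) simp
      then have "ennreal (a j) * ennreal (W (x, xs j)) = ennreal (w j x)"
        using a_pos[of j] j w_nonneg[of j x] by (simp add: ennreal_mult[symmetric])
      then show "ennreal (a j) * (ennreal (W (x, xs j)) * g (x, xs j)) = ennreal (w j x) * g (x, xs j)"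
        by (simp add: mult.assoc[symmetric])
    qed
    finally show "(\<integral>\<^sup>+y. ennreal (W (x, y)) * g (x, y) \<partial>\<nu>) = (\<Sum>j<m. ennreal (w j x) * g (x, xs j))" .
  qed
  finally show ?thesis .
qed

lemma space_atomic_plan: "space (atomic_plan w) = UNIV"
  using sets_eq_imp_space_eq[OF sets_atomic_plan] by simp

lemma emeasure_distr_atomic_plan:
  assumes [measurable]: "h \<in> borel \<rightarrow>\<^sub>M borel" "A \<in> sets borel"
  shows "emeasure (distr (atomic_plan w) borel h) A
    = (\<integral>\<^sup>+x. (\<Sum>j<m. ennreal (w j x) * indicator A (h (x, xs j))) \<partial>lborel)"
proof -
  have h: "h \<in> atomic_plan w \<rightarrow>\<^sub>M borel"
    by (subst measurable_cong_sets[OF sets_atomic_plan refl]) (rule assms)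
  have "emeasure (distr (atomic_plan w) borel h) A = emeasure (atomic_plan w) (h -` A)"
    using emeasure_distr[OF h assms(2)] by (simp add: space_atomic_plan)
  also have "\<dots> = (\<integral>\<^sup>+z. indicator (h -` A) z \<partial>atomic_plan w)"
    using measurable_sets[OF h assms(2)] by (simp add: space_atomic_plan)
  also have "(\<lambda>z. indicator (h -` A) z :: ennreal) = (\<lambda>z. indicator A (h z))"
    by (auto simp: indicator_def)
  finally show ?thesis by (simp add: nn_integral_atomic_plan)
qed

lemma atomic_plan_transport_plan:
  assumes mass: "\<And>i. i < m \<Longrightarrow> (\<integral>\<^sup>+x. ennreal (w i x) \<partial>lborel) = ennreal (a i)"
  shows "atomic_plan w \<in> transport_plans (density lborel (\<lambda>x. ennreal (\<Sum>i<m. w i x))) \<nu>"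
proof -
  have fst_marginal: "distr (atomic_plan w) borel fst = density lborel (\<lambda>x. ennreal (\<Sum>i<m. w i x))"
  proof (rule measure_eqI)
    fix A assume "A \<in> sets (distr (atomic_plan w) borel fst)"
    then have [measurable]: "A \<in> sets borel" by simp
    have "emeasure (distr (atomic_plan w) borel fst) A
        = (\<integral>\<^sup>+x. (\<Sum>j<m. ennreal (w j x)) * indicator A x \<partial>lborel)"
      by (simp add: emeasure_distr_atomic_plan sum_distrib_right)
    then show "emeasure (distr (atomic_plan w) borel fst) A
        = emeasure (density lborel (\<lambda>x. ennreal (\<Sum>i<m. w i x))) A"
      using w_nonneg by (simp add: emeasure_density sum_ennreal)
  qed simp
  have snd_marginal: "distr (atomic_plan w) borel snd = \<nu>"
  proof (rule measure_eqI)
    fix A assume "A \<in> sets (distr (atomic_plan w) borel snd)"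
    then have [measurable]: "A \<in> sets borel" by simp
    have "emeasure (distr (atomic_plan w) borel snd) A
        = (\<integral>\<^sup>+x. (\<Sum>j<m. ennreal (w j x) * indicator A (xs j)) \<partial>lborel)"
      by (simp add: emeasure_distr_atomic_plan)
    also have "\<dots> = (\<Sum>j<m. ennreal (a j) * indicator A (xs j))"
      using mass by (simp add: nn_integral_sum nn_integral_multc)
    finally show "emeasure (distr (atomic_plan w) borel snd) A = emeasure \<nu> A"
      using \<nu>_def by simp
  qed (simp add: \<nu>_sets)
  have "emeasure (atomic_plan w) (space (atomic_plan w)) = emeasure \<nu> UNIV"
    using emeasure_distr_atomic_plan[of snd UNIV] snd_marginal
      nn_integral_atomic_plan[of "\<lambda>_. 1"] by (simp add: space_atomic_plan)
  then have "prob_space (atomic_plan w)"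
    using \<nu>.emeasure_space_1 by (intro prob_spaceI) (simp add: space_\<nu>)
  then show ?thesis
    unfolding transport_plans_def using sets_atomic_plan fst_marginal snd_marginal by blast
qed

end

section \<open>Weak duality\<close>

lemma sum_levels_minus_potential_le_cost:
  assumes "y \<in> xs ` {..<m}"
  shows "(\<Sum>i<m. l i * indicator {xs i} y) - potential l x \<le> dist x y powr p"
proof -
  obtain j where j: "j < m" "y = xs j" using assms by auto
  then have "(\<Sum>i<m. l i * indicator {xs i} y) - potential l x = l j - potential l x"
    by (simp only: sum_indicator_atoms)
  also have "\<dots> \<le> cost j x"
    using potential_ge[OF j(1), of l x] by simp
  finally show ?thesis using j by (simp add: cost_def)
qed

lemma transport_cost_ge:
  assumes \<gamma>: "\<gamma> \<in> transport_plans \<rho> \<nu>" and \<rho>: "\<rho> \<in> prob_on \<Omega>"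
  shows "ennreal ((\<Sum>i<m. l i * a i) - (\<integral>x. indicator \<Omega> x * potential l x \<partial>\<rho>))
    \<le> (\<integral>\<^sup>+z. ennreal (dist (fst z) (snd z) powr p) \<partial>\<gamma>)"
proof -
  interpret \<gamma>: prob_space \<gamma>
    using \<gamma> unfolding transport_plans_def by auto
  note meas = measurable_transport_plan[OF \<gamma>]
  define g where "g z = (\<Sum>i<m. l i * indicator {xs i} (snd z)) - indicator \<Omega> (fst z) * potential l (fst z)"
    for z :: "'a \<times> 'a"
  have ind_int: "integrable \<gamma> (\<lambda>z. indicator {xs i} (snd z) :: real)" for i
    by (rule \<gamma>.integrable_const_bound[where B=1]) (auto intro: meas)
  have pot_int: "integrable \<gamma> (\<lambda>z. indicator \<Omega> (fst z) * potential l (fst z))"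
    by (rule \<gamma>.integrable_const_bound[where B="\<bar>lmax l\<bar> + diameter \<Omega> powr p"])
      (auto intro: meas simp: indicator_def potential_bounded)
  have "(\<integral>z. indicator {xs i} (snd z) \<partial>\<gamma>) = a i" if "i < m" for i
    using integral_transport_plan_snd[OF \<gamma>, of "indicator {xs i}"] emeasure_\<nu>_atom[OF that] a_pos[OF that]
    by (simp add: measure_def space_\<nu>)
  then have "(\<integral>z. (\<Sum>i<m. l i * indicator {xs i} (snd z)) \<partial>\<gamma>) = (\<Sum>i<m. l i * a i)"
    by (subst Bochner_Integration.integral_sum) (auto intro: integrable_mult_right ind_int)
  moreover have "(\<integral>z. indicator \<Omega> (fst z) * potential l (fst z) \<partial>\<gamma>)
      = (\<integral>x. indicator \<Omega> x * potential l x \<partial>\<rho>)"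
    by (rule integral_transport_plan_fst[OF \<gamma>]) measurable
  moreover have "(\<integral>z. g z \<partial>\<gamma>) = (\<integral>z. (\<Sum>i<m. l i * indicator {xs i} (snd z)) \<partial>\<gamma>)
      - (\<integral>z. indicator \<Omega> (fst z) * potential l (fst z) \<partial>\<gamma>)"
    unfolding g_def
    by (intro Bochner_Integration.integral_diff Bochner_Integration.integrable_sum
        integrable_mult_right ind_int pot_int)
  ultimately have g_integral:
    "(\<integral>z. g z \<partial>\<gamma>) = (\<Sum>i<m. l i * a i) - (\<integral>x. indicator \<Omega> x * potential l x \<partial>\<rho>)"
    by simp
  have g_int: "integrable \<gamma> g"
    unfolding g_def by (intro Bochner_Integration.integrable_diff Bochner_Integration.integrable_sum
        integrable_mult_right ind_int pot_int)
  have "AE x in \<rho>. x \<in> \<Omega>"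
    using \<rho> unfolding prob_on_def by (auto intro: AE_I[of _ _ "- \<Omega>"])
  have "AE z in \<gamma>. g z \<le> dist (fst z) (snd z) powr p"
    using AE_transport_plan_fst[OF \<gamma> \<open>AE x in \<rho>. x \<in> \<Omega>\<close>] AE_transport_plan_snd[OF \<gamma> AE_\<nu>_atoms]
  proof eventually_elim
    case (elim z)
    then show ?case
      unfolding g_def using sum_levels_minus_potential_le_cost[OF elim(2)]
      by (simp only: indicator_simps mult_1)
  qed
  from ennreal_integral_le_nn_integral[OF g_int this] show ?thesis
    unfolding g_integral .
qed

definition duality_gap :: "(nat \<Rightarrow> real) \<Rightarrow> ('a \<Rightarrow> real) \<Rightarrow> 'a \<Rightarrow> real" where
  "duality_gap l v x = fstar (potential l x) - (potential l x * v x - f (v x))"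

lemma duality_gap_nonneg: "0 \<le> v x \<Longrightarrow> 0 \<le> duality_gap l v x"
  unfolding duality_gap_def using fenchel_young[of "v x" "potential l x"] by (simp add: mult.commute)

lemma duality_gap_pos: "0 \<le> v x \<Longrightarrow> v x \<noteq> kplus (potential l x) \<Longrightarrow> 0 < duality_gap l v x"
  unfolding duality_gap_def using fenchel_young_strict[of "v x" "potential l x"]
  by (simp add: mult.commute)

context
  fixes v :: "'a \<Rightarrow> real"
  assumes v_meas[measurable]: "v \<in> borel_measurable borel" and v_nonneg: "\<forall>x. 0 \<le> v x"
    and v_prob_on: "density lborel (\<lambda>x. ennreal (v x)) \<in> prob_on \<Omega>"
begin

lemma integrable_potential_mult_density: "integrable L\<Omega> (\<lambda>x. potential l x * v x)"
proof -
  have "integrable lborel v"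
    using prob_on_densityD(1)[OF v_prob_on v_meas v_nonneg sets_\<Omega>] v_nonneg
    by (intro integrableI_nn_integral_finite[where x=1]) auto
  then have "integrable L\<Omega> v"
    unfolding integrable_L\<Omega>_iff using integrable_mult_indicator[of \<Omega> lborel v] by simp
  then show ?thesis
  proof (rule Bochner_Integration.integrable_bound[OF integrable_mult_right])
    show "(\<lambda>x. potential l x * v x) \<in> borel_measurable L\<Omega>"
      by (intro measurable_L\<Omega>) measurable
    have "\<bar>potential l x * v x\<bar> \<le> \<bar>(\<bar>lmax l\<bar> + diameter \<Omega> powr p) * v x\<bar>" if "x \<in> \<Omega>" for x
      using potential_bounded[OF that, of l] v_nonneg by (simp add: abs_mult mult_right_mono)
    then show "AE x in L\<Omega>. norm (potential l x * v x) \<le> norm ((\<bar>lmax l\<bar> + diameter \<Omega> powr p) * v x)"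
      by (intro AE_I2) (simp add: space_L\<Omega>)
  qed
qed

lemma Tp_density_ge:
  "ennreal ((\<Sum>i<m. l i * a i) - (\<integral>x. potential l x * v x \<partial>L\<Omega>))
     \<le> Tp p (density lborel (\<lambda>x. ennreal (v x))) \<nu>"
  unfolding Tp_def
proof (rule INF_greatest)
  fix \<gamma> assume \<gamma>: "\<gamma> \<in> transport_plans (density lborel (\<lambda>x. ennreal (v x))) \<nu>"
  have "(\<integral>x. indicator \<Omega> x * potential l x \<partial>density lborel (\<lambda>x. ennreal (v x)))
      = (\<integral>x. potential l x * v x \<partial>L\<Omega>)"
    unfolding integral_L\<Omega> using v_nonneg by (subst integral_density) (auto simp: mult_ac)
  then show "ennreal ((\<Sum>i<m. l i * a i) - (\<integral>x. potential l x * v x \<partial>L\<Omega>))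
      \<le> (\<integral>\<^sup>+z. ennreal (dist (fst z) (snd z) powr p) \<partial>\<gamma>)"
    using transport_cost_ge[OF \<gamma> v_prob_on, of l] by simp
qed

lemma Ffun_density_L\<Omega>:
  "Ffun f \<Omega> (density lborel (\<lambda>x. ennreal (v x))) = (\<integral>\<^sup>+x. ennreal (f (v x)) \<partial>L\<Omega>)"
  unfolding Ffun_density[OF v_meas v_nonneg] L\<Omega>_def
  by (subst nn_integral_restrict_space) (auto simp: mult.commute)

lemma weak_duality:
  assumes finite: "frakF p f \<Omega> \<nu> (density lborel (\<lambda>x. ennreal (v x))) < \<infinity>"
  shows "integrable L\<Omega> (duality_gap l v)"
    and "ennreal (dual l + (\<integral>x. duality_gap l v x \<partial>L\<Omega>))
      \<le> frakF p f \<Omega> \<nu> (density lborel (\<lambda>x. ennreal (v x)))"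
proof -
  have "(\<integral>\<^sup>+x. ennreal (f (v x)) \<partial>L\<Omega>) < \<infinity>"
    using finite unfolding frakF_def Ffun_density_L\<Omega> by (simp add: less_top[symmetric])
  then have f_int: "integrable L\<Omega> (\<lambda>x. f (v x))"
    using v_nonneg nonneg by (intro integrableI_nonneg) (auto intro!: measurable_L\<Omega>)
  note pv_int = integrable_potential_mult_density[of l]
  show "integrable L\<Omega> (duality_gap l v)"
    unfolding duality_gap_def
    by (intro Bochner_Integration.integrable_diff integrable_fstar_potential pv_int f_int)
  have "dual l + (\<integral>x. duality_gap l v x \<partial>L\<Omega>)
      = ((\<Sum>i<m. l i * a i) - (\<integral>x. potential l x * v x \<partial>L\<Omega>)) + (\<integral>x. f (v x) \<partial>L\<Omega>)"
    unfolding duality_gap_def dual_def using integrable_fstar_potential pv_int f_int by simp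
  then have "ennreal (dual l + (\<integral>x. duality_gap l v x \<partial>L\<Omega>))
      \<le> ennreal ((\<Sum>i<m. l i * a i) - (\<integral>x. potential l x * v x \<partial>L\<Omega>)) + ennreal (\<integral>x. f (v x) \<partial>L\<Omega>)"
    using v_nonneg nonneg by (simp only:) (intro ennreal_add_le integral_nonneg_AE AE_I2, simp)
  also have "\<dots> \<le> frakF p f \<Omega> \<nu> (density lborel (\<lambda>x. ennreal (v x)))"
    unfolding frakF_def Ffun_density_L\<Omega>
  proof (rule add_mono[OF Tp_density_ge])
    show "ennreal (\<integral>x. f (v x) \<partial>L\<Omega>) \<le> (\<integral>\<^sup>+x. ennreal (f (v x)) \<partial>L\<Omega>)"
      using f_int v_nonneg nonneg by (subst nn_integral_eq_integral) auto
  qed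
  finally show "ennreal (dual l + (\<integral>x. duality_gap l v x \<partial>L\<Omega>))
      \<le> frakF p f \<Omega> \<nu> (density lborel (\<lambda>x. ennreal (v x)))" .
qed

end

lemma integrable_kplus_potential_mult:
  fixes g :: "'a \<Rightarrow> real"
  assumes "g \<in> borel_measurable borel" "\<And>x. x \<in> \<Omega> \<Longrightarrow> \<bar>g x\<bar> \<le> B"
  shows "integrable L\<Omega> (\<lambda>x. kplus (potential l x) * g x)"
proof (rule integrable_L\<Omega>_bounded[where B="kplus (lmax l) * B"])
  show "(\<lambda>x. kplus (potential l x) * g x) \<in> borel_measurable borel"
    using assms(1) by measurable
  fix x assume "x \<in> \<Omega>"
  then show "\<bar>kplus (potential l x) * g x\<bar> \<le> kplus (lmax l) * B"
    using assms(2) kplus_nonneg kplus_mono[OF potential_le_lmax]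
    by (simp add: abs_mult) (intro mult_mono, auto)
qed

lemma dual_supergradient:
  "(\<Sum>i<m. (l' i - l i) * a i) - (\<integral>x. kplus (potential l' x) * (potential l' x - potential l x) \<partial>L\<Omega>)
     \<le> dual l' - dual l"
proof -
  have "fstar (potential l' x) - fstar (potential l x)
      \<le> kplus (potential l' x) * (potential l' x - potential l x)" for x
    using fstar_support[of "potential l' x" "potential l x"] by (simp add: algebra_simps)
  moreover have "integrable L\<Omega> (\<lambda>x. kplus (potential l' x) * (potential l' x - potential l x))"
    using potential_lipschitz[of l' _ l]
    by (intro integrable_kplus_potential_mult[where B="\<Sum>i<m. \<bar>l' i - l i\<bar>"]) auto
  ultimately have "(\<integral>x. fstar (potential l' x) - fstar (potential l x) \<partial>L\<Omega>)
      \<le> (\<integral>x. kplus (potential l' x) * (potential l' x - potential l x) \<partial>L\<Omega>)"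
    by (intro integral_mono Bochner_Integration.integrable_diff integrable_fstar_potential)
  then have "(\<integral>x. fstar (potential l' x) \<partial>L\<Omega>) - (\<integral>x. fstar (potential l x) \<partial>L\<Omega>)
      \<le> (\<integral>x. kplus (potential l' x) * (potential l' x - potential l x) \<partial>L\<Omega>)"
    using integrable_fstar_potential by simp
  then show ?thesis
    unfolding dual_def by (simp add: sum_subtractf left_diff_distrib)
qed

section \<open>One-sided derivatives of the potential\<close>

definition active :: "(nat \<Rightarrow> real) \<Rightarrow> 'a \<Rightarrow> nat set" where
  "active l x = {i. i < m \<and> l i - cost i x = potential l x}"

lemma active_subset: "active l x \<subseteq> {..<m}"
  unfolding active_def by auto

lemma finite_active: "finite (active l x)"
  using active_subset finite_subset by blast

lemma active_nonempty: "active l x \<noteq> {}"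
  using potential_attained[of l x] unfolding active_def by auto

lemma potential_perturb_eq:
  fixes e :: "nat \<Rightarrow> real"
  assumes t: "0 < t"
    and small: "\<And>i. i \<in> {..<m} - active l x \<Longrightarrow>
      t * (\<bar>e i\<bar> + \<bar>Max (e ` active l x)\<bar>) < potential l x - (l i - cost i x)"
  shows "potential (\<lambda>i. l i + t * e i) x = potential l x + t * Max (e ` active l x)"
  unfolding potential_def[of "\<lambda>i. l i + t * e i"]
proof (rule Max_eqI)
  define E where "E = Max (e ` active l x)"
  have "E \<in> e ` active l x"
    unfolding E_def using finite_active active_nonempty by (intro Max_in) auto
  then obtain j where "j \<in> active l x" "E = e j" by auto
  then show "potential l x + t * Max (e ` active l x) \<in> (\<lambda>i. l i + t * e i - cost i x) ` {..<m}"
    using active_subset unfolding active_def E_def by force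
  fix y assume "y \<in> (\<lambda>i. l i + t * e i - cost i x) ` {..<m}"
  then obtain i where i: "i < m" "y = l i + t * e i - cost i x" by auto
  show "y \<le> potential l x + t * E"
  proof (cases "i \<in> active l x")
    case True
    have "e i \<le> E"
      unfolding E_def using True finite_active by (intro Max_ge) auto
    then have "t * e i \<le> t * E"
      using t by (intro mult_left_mono) auto
    then show ?thesis
      using i True unfolding active_def by auto
  next
    case False
    have "t * e i \<le> t * \<bar>e i\<bar>" "t * (- \<bar>E\<bar>) \<le> t * E"
      using t by (intro mult_left_mono; simp)+
    then show ?thesis using small[of i] False i unfolding E_def by (simp add: algebra_simps)
  qed
qed simp

lemma eventually_potential_perturb:
  fixes e :: "nat \<Rightarrow> real"
  shows "\<forall>\<^sub>F t in at_right 0. potential (\<lambda>i. l i + t * e i) x = potential l x + t * Max (e ` active l x)"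
proof -
  have "\<forall>\<^sub>F t in at_right 0. t * (\<bar>e i\<bar> + \<bar>Max (e ` active l x)\<bar>) < potential l x - (l i - cost i x)"
    if "i \<in> {..<m} - active l x" for i
  proof (rule order_tendstoD(2))
    show "((\<lambda>t. t * (\<bar>e i\<bar> + \<bar>Max (e ` active l x)\<bar>)) \<longlongrightarrow> 0) (at_right 0)"
      by (auto intro!: tendsto_eq_intros)
    show "0 < potential l x - (l i - cost i x)"
      using that potential_ge[of i l x] unfolding active_def by auto
  qed
  then have "\<forall>\<^sub>F t in at_right 0. 0 < t \<and> (\<forall>i\<in>{..<m} - active l x.
      t * (\<bar>e i\<bar> + \<bar>Max (e ` active l x)\<bar>) < potential l x - (l i - cost i x))"
    by (intro eventually_conj eventually_at_right_less eventually_ball_finite) auto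
  then show ?thesis
    by eventually_elim (intro potential_perturb_eq; blast)
qed

lemma filterlim_inverse_Suc_at_right: "filterlim (\<lambda>n. 1 / real (Suc n)) (at_right 0) sequentially"
  by (intro tendsto_imp_filterlim_at_right LIMSEQ_inverse_real_of_nat[unfolded inverse_eq_divide])
    simp

lemma eventually_potential_perturb_sequentially:
  fixes e :: "nat \<Rightarrow> real"
  shows "\<forall>\<^sub>F n in sequentially. potential (\<lambda>i. l i + 1 / Suc n * e i) x
    = potential l x + 1 / Suc n * Max (e ` active l x)"
  using eventually_compose_filterlim[OF eventually_potential_perturb filterlim_inverse_Suc_at_right] .

lemma borel_measurable_max_active[measurable]:
  fixes e :: "nat \<Rightarrow> real"
  shows "(\<lambda>x. Max (e ` active l x)) \<in> borel_measurable borel"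
proof (rule borel_measurable_LIMSEQ_real)
  fix x
  show "(\<lambda>n. (potential (\<lambda>i. l i + 1 / Suc n * e i) x - potential l x) * Suc n)
      \<longlonglongrightarrow> Max (e ` active l x)"
    by (rule Lim_transform_eventually[OF tendsto_const])
      (use eventually_potential_perturb_sequentially[of l e x] in \<open>auto elim: eventually_mono\<close>)
qed measurable

lemma potential_perturb_bound:
  "\<bar>potential (\<lambda>i. l i + t * e i) x - potential l x\<bar> \<le> \<bar>t\<bar> * (\<Sum>i<m. \<bar>e i\<bar>)"
  using potential_lipschitz[of "\<lambda>i. l i + t * e i" x l] by (simp add: abs_mult sum_distrib_left)

lemma tendsto_kplus_potential_quotient:
  fixes e :: "nat \<Rightarrow> real"
  shows "(\<lambda>n. kplus (potential (\<lambda>i. l i + 1 / Suc n * e i) x)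
      * ((potential (\<lambda>i. l i + 1 / Suc n * e i) x - potential l x) * Suc n))
    \<longlonglongrightarrow> kplus (potential l x) * Max (e ` active l x)"
proof -
  have "(\<lambda>n. kplus (potential l x + 1 / Suc n * Max (e ` active l x)) * Max (e ` active l x))
      \<longlonglongrightarrow> kplus (potential l x + 0 * Max (e ` active l x)) * Max (e ` active l x)"
    by (intro tendsto_intros isCont_tendsto_compose[OF isCont_kplus]
        LIMSEQ_inverse_real_of_nat[unfolded inverse_eq_divide])
  moreover have "\<forall>\<^sub>F n in sequentially.
      kplus (potential l x + 1 / Suc n * Max (e ` active l x)) * Max (e ` active l x)
      = kplus (potential (\<lambda>i. l i + 1 / Suc n * e i) x)
        * ((potential (\<lambda>i. l i + 1 / Suc n * e i) x - potential l x) * Suc n)"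
    using eventually_potential_perturb_sequentially[of l e x] by (auto elim!: eventually_mono)
  ultimately show ?thesis
    by (simp add: Lim_transform_eventually)
qed

end

section \<open>The optimal density at a maximiser of the dual\<close>

locale dual_maximizer = semidiscrete_problem +
  fixes l :: "nat \<Rightarrow> real"
  assumes maximal: "\<And>l'. dual l' \<le> dual l"
begin

(* At the maximiser the one-sided derivative of the dual in any direction e is nonpositive; in that
   direction the potential moves at the rate max {e i | i active}. *)
lemma first_order_condition:
  fixes e :: "nat \<Rightarrow> real"
  shows "(\<Sum>i<m. e i * a i) \<le> (\<integral>x. kplus (potential l x) * Max (e ` active l x) \<partial>L\<Omega>)"
proof -
  define L where "L n = (\<lambda>i. l i + 1 / Suc n * e i)" for n
  define q where "q n x = (potential (L n) x - potential l x) * Suc n" for n x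
  define S where "S = (\<Sum>i<m. \<bar>e i\<bar>)"
  have diff_bound: "\<bar>potential (L n) x - potential l x\<bar> \<le> S / Suc n" for n x
    using potential_perturb_bound[of l "1 / Suc n" e x] unfolding L_def S_def by simp
  have q_bound: "\<bar>q n x\<bar> \<le> S" for n x
    using diff_bound[of n x] unfolding q_def
    by (simp add: abs_mult le_divide_eq del: of_nat_Suc)
  have "0 \<le> S" unfolding S_def by (simp add: sum_nonneg)
  then have "S / Suc n \<le> S" for n
    by (simp add: divide_le_eq mult_le_cancel_left1 del: of_nat_Suc)
  then have potential_L: "potential (L n) x \<le> lmax l + S" for n x
    using diff_bound[of n x] potential_le_lmax[of l x] by (smt (verit))
  have "(\<Sum>i<m. e i * a i) \<le> (\<integral>x. kplus (potential (L n) x) * q n x \<partial>L\<Omega>)" for n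
  proof -
    let ?d = "\<lambda>x. kplus (potential (L n) x) * (potential (L n) x - potential l x)"
    have "(\<Sum>i<m. (L n i - l i) * a i) - (\<integral>x. ?d x \<partial>L\<Omega>) \<le> 0"
      using dual_supergradient[of "L n" l] maximal[of "L n"] by linarith
    moreover have "(\<Sum>i<m. (L n i - l i) * a i) = (\<Sum>i<m. e i * a i) / Suc n"
      unfolding L_def by (simp add: sum_divide_distrib)
    ultimately have "(\<Sum>i<m. e i * a i) \<le> Suc n * (\<integral>x. ?d x \<partial>L\<Omega>)"
      by (simp add: divide_le_eq mult.commute del: of_nat_Suc)
    also have "\<dots> = (\<integral>x. kplus (potential (L n) x) * q n x \<partial>L\<Omega>)"
      unfolding q_def by (simp add: mult_ac del: of_nat_Suc)
    finally show ?thesis .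
  qed
  moreover have "(\<lambda>n. \<integral>x. kplus (potential (L n) x) * q n x \<partial>L\<Omega>)
      \<longlonglongrightarrow> (\<integral>x. kplus (potential l x) * Max (e ` active l x) \<partial>L\<Omega>)"
  proof (rule integral_dominated_convergence[where w="\<lambda>_. kplus (lmax l + S) * S"])
    show "AE x in L\<Omega>. norm (kplus (potential (L n) x) * q n x) \<le> kplus (lmax l + S) * S" for n
      using q_bound kplus_nonneg kplus_mono[OF potential_L]
      by (intro AE_I2) (simp add: abs_mult mult_mono)
    show "AE x in L\<Omega>. (\<lambda>n. kplus (potential (L n) x) * q n x)
        \<longlonglongrightarrow> kplus (potential l x) * Max (e ` active l x)"
      using tendsto_kplus_potential_quotient unfolding L_def q_def by simp
  qed (auto intro!: measurable_L\<Omega> simp: q_def)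
  ultimately show ?thesis by (intro LIMSEQ_le_const) auto
qed

definition patterns :: "nat set set" where "patterns = range (active l)"

lemma active_in_patterns: "active l x \<in> patterns"
  unfolding patterns_def by simp

lemma finite_patterns: "finite patterns"
  using finite_subset[of patterns "Pow {..<m}"] active_subset unfolding patterns_def by auto

lemma patterns_subset: "T \<in> patterns \<Longrightarrow> T \<noteq> {} \<and> T \<subseteq> {..<m}"
  unfolding patterns_def using active_nonempty active_subset by blast

lemma sets_active_eq[measurable]: "{x. active l x = T} \<in> sets borel"
proof (cases "T \<subseteq> {..<m}")
  case True
  then have "{x. active l x = T} = {x \<in> space borel. \<forall>i<m. i \<in> T \<longleftrightarrow> l i - cost i x = potential l x}"
    unfolding active_def by auto
  also have "\<dots> \<in> sets borel" by measurable
  finally show ?thesis .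
next
  case False
  then have "{x. active l x = T} = {}" using active_subset by blast
  then show ?thesis by simp
qed

lemma sum_patterns_indicator:
  "(\<Sum>T\<in>patterns. g T * indicator {x. active l x = T} x) = (g (active l x) :: real)"
proof -
  have "(\<Sum>T\<in>patterns. g T * indicator {x. active l x = T} x) = (\<Sum>T\<in>patterns. if T = active l x then g T else 0)"
    by (intro sum.cong) (auto simp: indicator_def)
  then show ?thesis using finite_patterns by (simp add: patterns_def)
qed

definition tie_mass :: "nat set \<Rightarrow> real" where
  "tie_mass T = (\<integral>x. kplus (potential l x) * indicator {x. active l x = T} x \<partial>L\<Omega>)"

lemma integrable_kplus_potential_indicator:
  "integrable L\<Omega> (\<lambda>x. kplus (potential l x) * indicator {x. active l x = T} x)"
  by (intro integrable_kplus_potential_mult[where B=1] borel_measurable_indicator sets_active_eq)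
    (simp add: indicator_def)

lemma first_order_condition_patterns:
  "(\<Sum>i<m. e i * a i) \<le> (\<Sum>T\<in>patterns. tie_mass T * Max (e ` T))"
proof -
  have "kplus (potential l x) * Max (e ` active l x)
      = (\<Sum>T\<in>patterns. Max (e ` T) * (kplus (potential l x) * indicator {x. active l x = T} x))" for x
  proof -
    have "(\<Sum>T\<in>patterns. Max (e ` T) * (kplus (potential l x) * indicator {x. active l x = T} x))
        = (\<Sum>T\<in>patterns. (Max (e ` T) * kplus (potential l x)) * indicator {x. active l x = T} x)"
      by (simp only: mult.assoc)
    also have "\<dots> = Max (e ` active l x) * kplus (potential l x)"
      by (rule sum_patterns_indicator)
    finally show ?thesis by (simp only: mult.commute)
  qed
  then have "(\<integral>x. kplus (potential l x) * Max (e ` active l x) \<partial>L\<Omega>)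
      = (\<Sum>T\<in>patterns. (\<integral>x. Max (e ` T) * (kplus (potential l x) * indicator {x. active l x = T} x) \<partial>L\<Omega>))"
    by (simp only: Bochner_Integration.integral_sum[OF integrable_mult_right[OF
          integrable_kplus_potential_indicator]])
  also have "\<dots> = (\<Sum>T\<in>patterns. tie_mass T * Max (e ` T))"
    unfolding tie_mass_def by (simp add: mult.commute)
  finally show ?thesis using first_order_condition[of e] by simp
qed

lemma splitting_of_tie_mass: "\<exists>\<sigma>\<in>splittings patterns. \<forall>i<m. (\<Sum>T\<in>patterns. tie_mass T * \<sigma> T i) = a i"
  by (rule splitting_exists[OF finite_patterns patterns_subset first_order_condition_patterns])

definition optimal_density :: "'a \<Rightarrow> real" where
  "optimal_density x = indicator \<Omega> x * kplus (potential l x)"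

lemma borel_measurable_optimal_density[measurable]: "optimal_density \<in> borel_measurable borel"
  unfolding optimal_density_def by measurable

lemma optimal_density_nonneg: "0 \<le> optimal_density x"
  unfolding optimal_density_def using kplus_nonneg by simp

lemma integrable_kplus_potential_potential: "integrable L\<Omega> (\<lambda>x. kplus (potential l x) * potential l x)"
  using potential_bounded[of _ l] by (intro integrable_kplus_potential_mult) auto

lemma integrable_f_kplus_potential: "integrable L\<Omega> (\<lambda>x. f (kplus (potential l x)))"
proof (rule integrable_L\<Omega>_bounded[where B="f (kplus (lmax l))"])
  show "(\<lambda>x. f (kplus (potential l x))) \<in> borel_measurable borel"
    using kplus_nonneg by measurable
  fix x
  have "f (kplus (potential l x)) \<le> f (kplus (lmax l))"
    using kplus_nonneg kplus_mono[OF potential_le_lmax] by (rule mono_nonneg)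
  then show "\<bar>f (kplus (potential l x))\<bar> \<le> f (kplus (lmax l))"
    using nonneg kplus_nonneg by simp
qed

lemma integral_f_kplus_potential_nonneg: "0 \<le> (\<integral>x. f (kplus (potential l x)) \<partial>L\<Omega>)"
  using nonneg kplus_nonneg by (intro integral_nonneg_AE) auto

lemma Ffun_optimal_density:
  "Ffun f \<Omega> (density lborel (\<lambda>x. ennreal (optimal_density x)))
     = ennreal (\<integral>x. f (kplus (potential l x)) \<partial>L\<Omega>)"
proof -
  have "(\<lambda>x. ennreal (f (optimal_density x)) * indicator \<Omega> x)
      = (\<lambda>x. ennreal (f (kplus (potential l x))) * indicator \<Omega> x)"
    by (auto simp: optimal_density_def indicator_def)
  then have "Ffun f \<Omega> (density lborel (\<lambda>x. ennreal (optimal_density x)))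
      = (\<integral>\<^sup>+x. ennreal (f (kplus (potential l x))) \<partial>L\<Omega>)"
    unfolding Ffun_density[OF borel_measurable_optimal_density allI[OF optimal_density_nonneg]] L\<Omega>_def
    by (subst nn_integral_restrict_space) simp_all
  also have "\<dots> = ennreal (\<integral>x. f (kplus (potential l x)) \<partial>L\<Omega>)"
    using nonneg kplus_nonneg
    by (intro nn_integral_eq_integral integrable_f_kplus_potential AE_I2) auto
  finally show ?thesis .
qed

lemma dual_eq_transport_plus_penalty:
  "dual l = ((\<Sum>j<m. l j * a j) - (\<integral>x. kplus (potential l x) * potential l x \<partial>L\<Omega>))
    + (\<integral>x. f (kplus (potential l x)) \<partial>L\<Omega>)"
proof -
  have "(\<lambda>x. fstar (potential l x))
      = (\<lambda>x. kplus (potential l x) * potential l x - f (kplus (potential l x)))"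
    unfolding fstar_def by (simp only: mult.commute)
  then have "(\<integral>x. fstar (potential l x) \<partial>L\<Omega>)
      = (\<integral>x. kplus (potential l x) * potential l x \<partial>L\<Omega>) - (\<integral>x. f (kplus (potential l x)) \<partial>L\<Omega>)"
    using Bochner_Integration.integral_diff[OF integrable_kplus_potential_potential
        integrable_f_kplus_potential] by (simp only:)
  then show ?thesis unfolding dual_def by linarith
qed

context
  fixes \<sigma> :: "nat set \<Rightarrow> nat \<Rightarrow> real"
  assumes \<sigma>: "\<sigma> \<in> splittings patterns"
    and \<sigma>_mass: "\<And>i. i < m \<Longrightarrow> (\<Sum>T\<in>patterns. tie_mass T * \<sigma> T i) = a i"
begin

(* The part of the optimal density sent to the atom xs i; where several cones tie, the mass is
   split according to \<sigma>. *)
definition share :: "nat \<Rightarrow> 'a \<Rightarrow> real" where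
  "share i x = optimal_density x * \<sigma> (active l x) i"

lemma borel_measurable_share[measurable]: "share i \<in> borel_measurable borel"
proof -
  have "share i = (\<lambda>x. optimal_density x * (\<Sum>T\<in>patterns. \<sigma> T i * indicator {x. active l x = T} x))"
    unfolding share_def sum_patterns_indicator ..
  then show ?thesis by simp
qed

lemma share_nonneg: "0 \<le> share i x"
  unfolding share_def using optimal_density_nonneg splittingsD(1)[OF \<sigma> active_in_patterns] by simp

lemma share_le: "share i x \<le> kplus (lmax l)"
proof -
  have "\<sigma> (active l x) i \<le> 1"
    using splittings_le_one[OF \<sigma> active_in_patterns finite_active] .
  then have "share i x \<le> optimal_density x"
    unfolding share_def using optimal_density_nonneg splittingsD(1)[OF \<sigma> active_in_patterns]
    by (intro mult_left_le) auto
  also have "\<dots> \<le> kplus (lmax l)"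
    unfolding optimal_density_def using kplus_nonneg kplus_mono[OF potential_le_lmax]
    by (simp add: indicator_def)
  finally show ?thesis .
qed

lemma share_eq_0: "i \<notin> active l x \<Longrightarrow> share i x = 0"
  unfolding share_def using splittingsD(2)[OF \<sigma> active_in_patterns] by simp

lemma sum_share: "(\<Sum>i<m. share i x) = optimal_density x"
proof -
  have "(\<Sum>i<m. \<sigma> (active l x) i) = (\<Sum>i\<in>active l x. \<sigma> (active l x) i)"
    using active_subset splittingsD(2)[OF \<sigma> active_in_patterns] by (intro sum.mono_neutral_right) auto
  then show ?thesis
    unfolding share_def using splittingsD(3)[OF \<sigma> active_in_patterns]
    by (simp add: sum_distrib_left[symmetric])
qed

lemma integrable_share: "integrable lborel (share i)"
proof -
  have "integrable L\<Omega> (share i)"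
    using share_nonneg share_le by (intro integrable_L\<Omega>_bounded[where B="kplus (lmax l)"]) auto
  moreover have "indicator \<Omega> x * share i x = share i x" for x
    unfolding share_def optimal_density_def by (simp add: indicator_def)
  ultimately show ?thesis unfolding integrable_L\<Omega>_iff by simp
qed

lemma integral_share: "i < m \<Longrightarrow> (\<integral>x. share i x \<partial>lborel) = a i"
proof -
  assume i: "i < m"
  have "share i x = indicator \<Omega> x * (\<Sum>T\<in>patterns. \<sigma> T i * (kplus (potential l x) * indicator {x. active l x = T} x))" for x
    unfolding share_def optimal_density_def
    using sum_patterns_indicator[of "\<lambda>T. \<sigma> T i * kplus (potential l x)" x] by (simp add: mult_ac)
  then have "(\<integral>x. share i x \<partial>lborel)
      = (\<integral>x. (\<Sum>T\<in>patterns. \<sigma> T i * (kplus (potential l x) * indicator {x. active l x = T} x)) \<partial>L\<Omega>)"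
    unfolding integral_L\<Omega> by presburger
  also have "\<dots> = (\<Sum>T\<in>patterns. \<sigma> T i * tie_mass T)"
    unfolding tie_mass_def
    by (simp only: Bochner_Integration.integral_sum[OF integrable_mult_right[OF
          integrable_kplus_potential_indicator]] integral_mult_right_zero)
  finally show ?thesis using \<sigma>_mass[OF i] by (simp add: mult.commute)
qed

lemma nn_integral_share: "i < m \<Longrightarrow> (\<integral>\<^sup>+x. ennreal (share i x) \<partial>lborel) = ennreal (a i)"
  using nn_integral_eq_integral[OF integrable_share] share_nonneg integral_share by simp

lemma sum_share_cost:
  "(\<Sum>j<m. share j x * cost j x)
     = (\<Sum>j<m. share j x * l j) - optimal_density x * potential l x"
proof -
  have "share j x * cost j x = share j x * l j - share j x * potential l x" for j
  proof (cases "j \<in> active l x")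
    case True
    then have "cost j x = l j - potential l x" unfolding active_def by auto
    then show ?thesis by (simp add: right_diff_distrib)
  qed (simp add: share_eq_0)
  then have "(\<Sum>j<m. share j x * cost j x) = (\<Sum>j<m. share j x * l j - share j x * potential l x)"
    by (intro sum.cong) auto
  then show ?thesis
    by (simp add: sum_subtractf sum_distrib_right[symmetric] sum_share)
qed

lemma integral_share_cost:
  "integrable lborel (\<lambda>x. \<Sum>j<m. share j x * cost j x)"
  "(\<integral>x. (\<Sum>j<m. share j x * cost j x) \<partial>lborel)
     = (\<Sum>j<m. l j * a j) - (\<integral>x. kplus (potential l x) * potential l x \<partial>L\<Omega>)"
proof -
  have cost_eq: "(\<lambda>x. \<Sum>j<m. share j x * cost j x)
      = (\<lambda>x. (\<Sum>j<m. share j x * l j) - indicator \<Omega> x * (kplus (potential l x) * potential l x))"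
    by (intro ext) (simp add: sum_share_cost optimal_density_def mult.assoc)
  have int1: "integrable lborel (\<lambda>x. \<Sum>j<m. share j x * l j)"
    using integrable_share by simp
  have int2: "integrable lborel (\<lambda>x. indicator \<Omega> x * (kplus (potential l x) * potential l x))"
    using integrable_kplus_potential_potential unfolding integrable_L\<Omega>_iff .
  show "integrable lborel (\<lambda>x. \<Sum>j<m. share j x * cost j x)"
    unfolding cost_eq using int1 int2 by simp
  have "(\<integral>x. (\<Sum>j<m. share j x * l j) \<partial>lborel) = (\<Sum>j<m. l j * a j)"
    using integrable_share integral_share
    by (subst Bochner_Integration.integral_sum) (auto simp: mult.commute)
  then show "(\<integral>x. (\<Sum>j<m. share j x * cost j x) \<partial>lborel)
      = (\<Sum>j<m. l j * a j) - (\<integral>x. kplus (potential l x) * potential l x \<partial>L\<Omega>)"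
    unfolding cost_eq integral_L\<Omega> using int1 int2 by simp
qed

lemma transport_value_nonneg: "0 \<le> (\<Sum>j<m. l j * a j) - (\<integral>x. kplus (potential l x) * potential l x \<partial>L\<Omega>)"
  unfolding integral_share_cost(2)[symmetric]
  using share_nonneg cost_nonneg by (intro integral_nonneg_AE AE_I2 sum_nonneg) auto

lemma Tp_optimal_density_le:
  "Tp p (density lborel (\<lambda>x. ennreal (optimal_density x))) \<nu>
     \<le> ennreal ((\<Sum>j<m. l j * a j) - (\<integral>x. kplus (potential l x) * potential l x \<partial>L\<Omega>))"
proof -
  note share = borel_measurable_share share_nonneg
  have plan: "atomic_plan share \<in> transport_plans (density lborel (\<lambda>x. ennreal (optimal_density x))) \<nu>"
    using atomic_plan_transport_plan[OF share nn_integral_share]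
    by (simp add: sum_share)
  have "Tp p (density lborel (\<lambda>x. ennreal (optimal_density x))) \<nu>
      \<le> (\<integral>\<^sup>+z. ennreal (dist (fst z) (snd z) powr p) \<partial>atomic_plan share)"
    unfolding Tp_def by (rule INF_lower[OF plan])
  also have "\<dots> = (\<integral>\<^sup>+x. ennreal (\<Sum>j<m. share j x * cost j x) \<partial>lborel)"
    using share cost_nonneg
    by (simp add: nn_integral_atomic_plan cost_def sum_ennreal ennreal_mult'[symmetric])
  also have "\<dots> = ennreal (\<integral>x. (\<Sum>j<m. share j x * cost j x) \<partial>lborel)"
    using integral_share_cost(1) share cost_nonneg
    by (intro nn_integral_eq_integral AE_I2 sum_nonneg) auto
  finally show ?thesis unfolding integral_share_cost(2) .
qed

lemma optimal_density_prob_on: "density lborel (\<lambda>x. ennreal (optimal_density x)) \<in> prob_on \<Omega>"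
proof (rule prob_on_densityI[OF borel_measurable_optimal_density _ _ sets_\<Omega>])
  have "ennreal (optimal_density x) = (\<Sum>i<m. ennreal (share i x))" for x
    using share_nonneg
    by (simp only: sum_share[symmetric] sum_ennreal)
  then have "(\<integral>\<^sup>+x. ennreal (optimal_density x) \<partial>lborel) = (\<Sum>i<m. \<integral>\<^sup>+x. ennreal (share i x) \<partial>lborel)"
    using borel_measurable_share by (simp only:) (rule nn_integral_sum; simp)
  also have "\<dots> = (\<Sum>i<m. ennreal (a i))"
    using nn_integral_share by simp
  also have "\<dots> = 1"
    using a_sum a_pos by (subst sum_ennreal) (auto intro: less_imp_le)
  finally show "(\<integral>\<^sup>+x. ennreal (optimal_density x) \<partial>lborel) = 1" .
qed (simp add: optimal_density_def)

lemma frakF_optimal_density_le: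
  "frakF p f \<Omega> \<nu> (density lborel (\<lambda>x. ennreal (optimal_density x))) \<le> ennreal (dual l)"
proof -
  have "frakF p f \<Omega> \<nu> (density lborel (\<lambda>x. ennreal (optimal_density x)))
      \<le> ennreal ((\<Sum>j<m. l j * a j) - (\<integral>x. kplus (potential l x) * potential l x \<partial>L\<Omega>))
        + ennreal (\<integral>x. f (kplus (potential l x)) \<partial>L\<Omega>)"
    unfolding frakF_def Ffun_optimal_density by (rule add_right_mono[OF Tp_optimal_density_le])
  also have "\<dots> = ennreal (dual l)"
    unfolding dual_eq_transport_plus_penalty
    using transport_value_nonneg integral_f_kplus_potential_nonneg by (rule ennreal_plus[symmetric])
  finally show ?thesis .
qed

end

lemma optimal_density_competitor:
  "density lborel (\<lambda>x. ennreal (optimal_density x)) \<in> prob_on \<Omega>"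
  "frakF p f \<Omega> \<nu> (density lborel (\<lambda>x. ennreal (optimal_density x))) \<le> ennreal (dual l)"
proof -
  obtain \<sigma> where "\<sigma> \<in> splittings patterns" "\<forall>i<m. (\<Sum>T\<in>patterns. tie_mass T * \<sigma> T i) = a i"
    using splitting_of_tie_mass by blast
  then show "density lborel (\<lambda>x. ennreal (optimal_density x)) \<in> prob_on \<Omega>"
    "frakF p f \<Omega> \<nu> (density lborel (\<lambda>x. ennreal (optimal_density x))) \<le> ennreal (dual l)"
    using optimal_density_prob_on[of \<sigma>] frakF_optimal_density_le[of \<sigma>] by simp_all
qed

lemma dual_nonneg: "0 \<le> dual l"
proof -
  have "potential (\<lambda>_. 0) x \<le> 0" for x
    using potential_attained[of "\<lambda>_. 0" x] cost_nonneg by auto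
  then have "(\<lambda>x. fstar (potential (\<lambda>_. 0) x)) = (\<lambda>x. 0)"
    by (intro ext fstar_eq_0)
  then have "dual (\<lambda>_. 0) = 0"
    unfolding dual_def by simp
  then show ?thesis using maximal[of "\<lambda>_. 0"] by simp
qed

lemma minimizer_density_eq:
  assumes u: "u \<in> borel_measurable borel" "\<forall>x. 0 \<le> u x"
    and u_in: "density lborel (\<lambda>x. ennreal (u x)) \<in> prob_on \<Omega>"
    and minimal: "\<forall>\<rho>\<in>prob_on \<Omega>. frakF p f \<Omega> \<nu> (density lborel (\<lambda>x. ennreal (u x))) \<le> frakF p f \<Omega> \<nu> \<rho>"
  shows "AE x in lborel. x \<in> \<Omega> \<longrightarrow> u x = kplus (potential l x)"
proof -
  have le_dual: "frakF p f \<Omega> \<nu> (density lborel (\<lambda>x. ennreal (u x))) \<le> ennreal (dual l)"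
    using minimal optimal_density_competitor(1) by (blast intro: order_trans[OF _ optimal_density_competitor(2)])
  then have finite: "frakF p f \<Omega> \<nu> (density lborel (\<lambda>x. ennreal (u x))) < \<infinity>"
    by (rule le_less_trans) simp
  have gap_int: "integrable L\<Omega> (duality_gap l u)"
    using weak_duality(1)[OF u u_in finite] .
  have "ennreal (dual l + (\<integral>x. duality_gap l u x \<partial>L\<Omega>)) \<le> ennreal (dual l)"
    using weak_duality(2)[OF u u_in finite] le_dual by (rule order_trans)
  then have "(\<integral>x. duality_gap l u x \<partial>L\<Omega>) \<le> 0"
    using dual_nonneg by (simp add: ennreal_le_iff)
  moreover have gap_nonneg: "0 \<le> duality_gap l u x" for x
    using u(2) by (intro duality_gap_nonneg) auto
  ultimately have "(\<integral>x. duality_gap l u x \<partial>L\<Omega>) = 0"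
    by (simp add: antisym integral_nonneg_AE)
  then have "AE x in L\<Omega>. duality_gap l u x = 0"
    using integral_nonneg_eq_0_iff_AE[OF gap_int] gap_nonneg by simp
  then have "AE x in L\<Omega>. u x = kplus (potential l x)"
    by eventually_elim (use duality_gap_pos[of u] u(2) in fastforce)
  then show ?thesis
    unfolding L\<Omega>_def by (subst (asm) AE_restrict_space_iff) auto
qed

end

theorem theorem4p2:
  fixes \<Omega> :: "'a::euclidean_space set"
    and p :: real and f f' k :: "real \<Rightarrow> real"
    and m :: nat and a :: "nat \<Rightarrow> real" and xs :: "nat \<Rightarrow> 'a"
    and \<nu> \<mu> :: "'a measure" and u :: "'a \<Rightarrow> real"
  assumes dom: "bounded_domain \<Omega>"
    and p: "p \<ge> 1"
    and f_nonneg: "\<forall>t\<ge>0. f t \<ge> 0"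
    and f_strict: "strictly_convex_on {0..} f"
    and f_deriv: "\<forall>t\<ge>0. (f has_real_derivative f' t) (at t within {0..})"
    and f'_cont: "continuous_on {0..} f'"
    and f0: "f 0 = 0" and f'0: "f' 0 = 0"
    and f_superlin: "filterlim (\<lambda>t. f t / t) at_top at_top"
    and k: "\<forall>s\<ge>0. k s \<ge> 0 \<and> f' (k s) = s"
    and atoms: "\<forall>i<m. xs i \<in> \<Omega> \<and> a i > 0"
    and atoms_distinct: "inj_on xs {..<m}"
    and a_sum: "(\<Sum>i<m. a i) = 1"
    and \<nu>_sets: "sets \<nu> = sets borel"
    and \<nu>_def: "\<forall>A\<in>sets borel. emeasure \<nu> A = (\<Sum>i<m. ennreal (a i) * indicator A (xs i))"
    and u_meas: "u \<in> borel_measurable borel"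
    and u_nonneg: "\<forall>x. 0 \<le> u x"
    and \<mu>_def: "\<mu> = density lborel (\<lambda>x. ennreal (u x))"
    and \<mu>_in: "\<mu> \<in> prob_on \<Omega>"
    and minimizer: "\<forall>\<rho>\<in>prob_on \<Omega>. frakF p f \<Omega> \<nu> \<mu> \<le> frakF p f \<Omega> \<nu> \<rho>"
  shows "\<exists>c :: nat \<Rightarrow> real.
           (AE y in lborel. y \<in> \<Omega> \<longrightarrow>
              u y = k (Max (insert 0 ((\<lambda>i. c i - dist y (xs i) powr p) ` {..<m})))) \<and>
           (AE y in lborel. (u y > 0 \<longleftrightarrow>
              y \<in> \<Omega> \<and> (\<exists>i<m. c i > 0 \<and> y \<in> ball (xs i) (c i powr (1 / p)))))"
proof -
  interpret semidiscrete_problem f f' k \<Omega> p m a xs \<nu>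
    by (intro semidiscrete_problem.intro convex_integrand.intro semidiscrete_problem_axioms.intro; fact)
  obtain l where "\<And>l'. dual l' \<le> dual l"
    using dual_has_max by blast
  then interpret dual_maximizer f f' k \<Omega> p m a xs \<nu> l
    by unfold_locales
  have inside: "AE y in lborel. y \<in> \<Omega> \<longrightarrow> u y = kplus (potential l y)"
    using minimizer_density_eq[OF u_meas u_nonneg \<mu>_in[unfolded \<mu>_def] minimizer[unfolded \<mu>_def]] .
  have outside: "AE y in lborel. y \<notin> \<Omega> \<longrightarrow> u y = 0"
    using prob_on_densityD(2)[OF \<mu>_in[unfolded \<mu>_def] u_meas u_nonneg sets_\<Omega>] .
  show ?thesis
  proof (intro exI[of _ l] conjI)
    show "AE y in lborel. y \<in> \<Omega> \<longrightarrow>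
        u y = k (Max (insert 0 ((\<lambda>i. l i - dist y (xs i) powr p) ` {..<m})))"
      using inside by eventually_elim (simp add: kplus_potential_eq)
    show "AE y in lborel. (u y > 0 \<longleftrightarrow>
        y \<in> \<Omega> \<and> (\<exists>i<m. l i > 0 \<and> y \<in> ball (xs i) (l i powr (1 / p))))"
      using inside outside
    proof eventually_elim
      case (elim y)
      then show ?case
        using kplus_potential_pos_iff[of l y] by (cases "y \<in> \<Omega>") auto
    qed
  qed
qed

end
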